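(* For every pseudo-torsion class $\mathcal P\subseteq\mathcal G$, the class $\mathcal P^\perp$ is a pseudo-torsionfree class and ${}^\perp(\mathcal P^\perp)=\mathcal P$. Dually, for every pseudo-torsionfree class $\mathcal Q$, ${}^\perp\mathcal Q$ is a pseudo-torsion class and $({}^\perp\mathcal Q)^\perp=\mathcal Q$. Hence $\mathcal P\mapsto\mathcal P^\perp$ is a bijection from pseudo-torsion classes to pseudo-torsionfree classes with inverse $\mathcal Q\mapsto{}^\perp\mathcal Q$.
   Context: Let $\Lambda$ be a finite dimensional algebra over a field and $\mathrm{mod}\text-\Lambda$ the category of finitely generated right $\Lambda$-modules. Fix a torsion class $\mathcal G\subseteq\mathrm{mod}\text-\Lambda$, i.e. a class of modules closed under isomorphisms, extensions and quotients. For $B\in\mathcal G$, a subobject of $B$ is a submodule of $B$ that lies in $\mathcal G$. A subobject $A\subseteq B$ is a strict subobject if $A\cap B'\in\mathcal G$ for every subobject $B'$ of $B$. A strict quotient of $B$ is $B/A$ with $A$ a strict subobject. A short exact sequence $0\to A\to B\to C\to0$ with $A,B,C\in\mathcal G$ is strict exact (and $B$ a strict extension of $A$ by $C$) if the image of $A$ is a strict subobject of $B$. A strict morphism is a homomorphism $f:A\to B$ with $A,B\in\mathcal G$ such that $\ker f\in\mathcal G$ is a strict subobject of $A$ and $\operatorname{im} f$ is a strict subobject of $B$. A pseudo-torsion class is a nonempty class $\mathcal P\subseteq\mathcal G$ closed under strict quotients and strict extensions. A pseudo-torsionfree class is a nonempty class $\mathcal Q\subseteq\mathcal G$ closed under strict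 subobjects and strict extensions. For $\mathcal X\subseteq\mathcal G$, $\mathcal X^\perp$ is the class of $Y\in\mathcal G$ such that every strict morphism $X\to Y$ with $X\in\mathcal X$ is zero, and ${}^\perp\mathcal X$ is the class of $Y\in\mathcal G$ such that every strict morphism $Y\to X$ with $X\in\mathcal X$ is zero. *)

theory Defs
  imports Complex_Main
begin

definition fd_algebra :: "('k::field \<Rightarrow> 'l::ring_1 \<Rightarrow> 'l) \<Rightarrow> bool" where
  "fd_algebra sc \<longleftrightarrow>
     (\<exists>B. finite_dimensional_vector_space sc B) \<and>
     (\<forall>c x y. sc c (x * y) = sc c x * y \<and> sc c (x * y) = x * sc c y)"

record ('m, 'l) rmod =
  rm_carrier :: "'m set"
  rm_add :: "'m \<Rightarrow> 'm \<Rightarrow> 'm"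
  rm_zero :: "'m"
  rm_act :: "'m \<Rightarrow> 'l \<Rightarrow> 'm"

definition rmodule :: "('m, 'l::ring_1) rmod \<Rightarrow> bool" where
  "rmodule M \<longleftrightarrow>
     rm_zero M \<in> rm_carrier M \<and>
     (\<forall>x\<in>rm_carrier M. \<forall>y\<in>rm_carrier M. rm_add M x y \<in> rm_carrier M) \<and>
     (\<forall>x\<in>rm_carrier M. \<forall>a. rm_act M x a \<in> rm_carrier M) \<and>
     (\<forall>x\<in>rm_carrier M. \<forall>y\<in>rm_carrier M. \<forall>z\<in>rm_carrier M.
        rm_add M (rm_add M x y) z = rm_add M x (rm_add M y z)) \<and>
     (\<forall>x\<in>rm_carrier M. \<forall>y\<in>rm_carrier M. rm_add M x y = rm_add M y x) \<and>
     (\<forall>x\<in>rm_carrier M. rm_add M (rm_zero M) x = x) \<and>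
     (\<forall>x\<in>rm_carrier M. \<exists>y\<in>rm_carrier M. rm_add M x y = rm_zero M) \<and>
     (\<forall>x\<in>rm_carrier M. \<forall>y\<in>rm_carrier M. \<forall>a.
        rm_act M (rm_add M x y) a = rm_add M (rm_act M x a) (rm_act M y a)) \<and>
     (\<forall>x\<in>rm_carrier M. \<forall>a b. rm_act M x (a + b) = rm_add M (rm_act M x a) (rm_act M x b)) \<and>
     (\<forall>x\<in>rm_carrier M. \<forall>a b. rm_act M x (a * b) = rm_act M (rm_act M x a) b) \<and>
     (\<forall>x\<in>rm_carrier M. rm_act M x 1 = x)"

definition submodule :: "('m, 'l::ring_1) rmod \<Rightarrow> 'm set \<Rightarrow> bool" where
  "submodule M N \<longleftrightarrow>
     N \<subseteq> rm_carrier M \<and> rm_zero M \<in> N \<and>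
     (\<forall>x\<in>N. \<forall>y\<in>N. rm_add M x y \<in> N) \<and>
     (\<forall>x\<in>N. \<forall>a. rm_act M x a \<in> N)"

definition restr :: "('m, 'l) rmod \<Rightarrow> 'm set \<Rightarrow> ('m, 'l) rmod" where
  "restr M N = M\<lparr>rm_carrier := N\<rparr>"

definition fin_gen :: "('m, 'l::ring_1) rmod \<Rightarrow> bool" where
  "fin_gen M \<longleftrightarrow> (\<exists>S. finite S \<and> S \<subseteq> rm_carrier M \<and>
     (\<forall>N. submodule M N \<and> S \<subseteq> N \<longrightarrow> rm_carrier M \<subseteq> N))"

definition rhom :: "('m, 'l) rmod \<Rightarrow> ('n, 'l) rmod \<Rightarrow> ('m \<Rightarrow> 'n) \<Rightarrow> bool" where
  "rhom M N f \<longleftrightarrow>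
     (\<forall>x\<in>rm_carrier M. f x \<in> rm_carrier N) \<and>
     (\<forall>x\<in>rm_carrier M. \<forall>y\<in>rm_carrier M. f (rm_add M x y) = rm_add N (f x) (f y)) \<and>
     (\<forall>x\<in>rm_carrier M. \<forall>a. f (rm_act M x a) = rm_act N (f x) a)"

definition kern :: "('m, 'l) rmod \<Rightarrow> ('n, 'l) rmod \<Rightarrow> ('m \<Rightarrow> 'n) \<Rightarrow> 'm set" where
  "kern M N f = {x \<in> rm_carrier M. f x = rm_zero N}"

definition short_exact ::
  "('m, 'l) rmod \<Rightarrow> ('m \<Rightarrow> 'm) \<Rightarrow> ('m, 'l) rmod \<Rightarrow> ('m \<Rightarrow> 'm) \<Rightarrow> ('m, 'l) rmod \<Rightarrow> bool" where
  "short_exact A f B g C \<longleftrightarrow>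
     rhom A B f \<and> rhom B C g \<and> inj_on f (rm_carrier A) \<and>
     g ` rm_carrier B = rm_carrier C \<and> f ` rm_carrier A = kern B C g"

text \<open>Modules are represented on the carrier type 'l list, which is large enough
that every finitely generated right Lambda-module has an isomorphic copy.\<close>
type_synonym 'l modl = "('l list, 'l) rmod"

definition modL :: "'l::ring_1 modl set" where
  "modL = {M. rmodule M \<and> fin_gen M}"

definition torsion_class :: "'l::ring_1 modl set \<Rightarrow> bool" where
  "torsion_class G \<longleftrightarrow>
     G \<subseteq> modL \<and>
     (\<forall>B C f. B \<in> G \<and> C \<in> modL \<and> rhom B C f \<and> bij_betw f (rm_carrier B) (rm_carrier C)
        \<longrightarrow> C \<in> G) \<and>
     (\<forall>B C g. B \<in> G \<and> C \<in> modL \<and> rhom B C g \<and> g ` rm_carrier B = rm_carrier C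
        \<longrightarrow> C \<in> G) \<and>
     (\<forall>A f B g C. A \<in> G \<and> C \<in> G \<and> B \<in> modL \<and> short_exact A f B g C \<longrightarrow> B \<in> G)"

definition subobj :: "'l::ring_1 modl set \<Rightarrow> 'l modl \<Rightarrow> 'l list set \<Rightarrow> bool" where
  "subobj G B N \<longleftrightarrow> submodule B N \<and> restr B N \<in> G"

definition strict_sub :: "'l::ring_1 modl set \<Rightarrow> 'l modl \<Rightarrow> 'l list set \<Rightarrow> bool" where
  "strict_sub G B A \<longleftrightarrow> subobj G B A \<and> (\<forall>B'. subobj G B B' \<longrightarrow> restr B (A \<inter> B') \<in> G)"

text \<open>C is (isomorphic to) a strict quotient B/A: there is an epimorphism B \<rightarrow> C
whose kernel is a strict subobject of B.\<close>
definition strict_quot :: "'l::ring_1 modl set \<Rightarrow> 'l modl \<Rightarrow> 'l modl \<Rightarrow> bool" where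
  "strict_quot G B C \<longleftrightarrow> B \<in> G \<and> C \<in> G \<and>
     (\<exists>g. rhom B C g \<and> g ` rm_carrier B = rm_carrier C \<and> strict_sub G B (kern B C g))"

definition strict_exact ::
  "'l::ring_1 modl set \<Rightarrow> 'l modl \<Rightarrow> ('l list \<Rightarrow> 'l list) \<Rightarrow> 'l modl
     \<Rightarrow> ('l list \<Rightarrow> 'l list) \<Rightarrow> 'l modl \<Rightarrow> bool" where
  "strict_exact G A f B g C \<longleftrightarrow> A \<in> G \<and> B \<in> G \<and> C \<in> G \<and>
     short_exact A f B g C \<and> strict_sub G B (f ` rm_carrier A)"

definition strict_mor ::
  "'l::ring_1 modl set \<Rightarrow> 'l modl \<Rightarrow> 'l modl \<Rightarrow> ('l list \<Rightarrow> 'l list) \<Rightarrow> bool" where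
  "strict_mor G A B f \<longleftrightarrow> A \<in> G \<and> B \<in> G \<and> rhom A B f \<and>
     strict_sub G A (kern A B f) \<and> strict_sub G B (f ` rm_carrier A)"

definition pseudo_torsion :: "'l::ring_1 modl set \<Rightarrow> 'l modl set \<Rightarrow> bool" where
  "pseudo_torsion G P \<longleftrightarrow> P \<noteq> {} \<and> P \<subseteq> G \<and>
     (\<forall>B C. B \<in> P \<and> strict_quot G B C \<longrightarrow> C \<in> P) \<and>
     (\<forall>A f B g C. A \<in> P \<and> C \<in> P \<and> strict_exact G A f B g C \<longrightarrow> B \<in> P)"

definition pseudo_torsionfree :: "'l::ring_1 modl set \<Rightarrow> 'l modl set \<Rightarrow> bool" where
  "pseudo_torsionfree G Q \<longleftrightarrow> Q \<noteq> {} \<and> Q \<subseteq> G \<and>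
     (\<forall>B A. B \<in> Q \<and> strict_sub G B A \<longrightarrow> restr B A \<in> Q) \<and>
     (\<forall>A f B g C. A \<in> Q \<and> C \<in> Q \<and> strict_exact G A f B g C \<longrightarrow> B \<in> Q)"

definition rperp :: "'l::ring_1 modl set \<Rightarrow> 'l modl set \<Rightarrow> 'l modl set" where
  "rperp G X = {Y \<in> G. \<forall>X0\<in>X. \<forall>f. strict_mor G X0 Y f \<longrightarrow>
                   (\<forall>x\<in>rm_carrier X0. f x = rm_zero Y)}"

definition lperp :: "'l::ring_1 modl set \<Rightarrow> 'l modl set \<Rightarrow> 'l modl set" where
  "lperp G X = {Y \<in> G. \<forall>X0\<in>X. \<forall>f. strict_mor G Y X0 f \<longrightarrow>
                   (\<forall>y\<in>rm_carrier Y. f y = rm_zero X0)}"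

end

(*
  The orthogonal classes are defined through strict morphisms, and strictness of subobjects is
  preserved under intersections, under restriction to strict subobjects, under images along
  morphisms with kernel in G and strict image, and under preimages along morphisms with strict
  kernel. This yields the closure properties making P^perp pseudo-torsionfree and perp Q
  pseudo-torsion.

  For perp (P^perp) = P, let Y be in perp (P^perp) and take a strict subobject T of Y that is
  maximal with T in P; it exists because finitely generated modules over a finite dimensional
  algebra have finite length. Then Y/T lies in P^perp: the image I of a strict morphism from an
  object of P into Y/T lies in P, so the preimage of I in Y is a strict extension of T by I, lies
  in P and equals T by maximality, whence I = 0. The projection Y -> Y/T is strict, hence zero,
  and Y = T lies in P.

  Dually, for Y in (perp Q)^perp take a strict subobject K minimal with Y/K in Q. For a strict
  h : K -> W with W in Q, the quotient Y/ker h is a strict extension of h(K) by Y/K, so ker h = K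
  by minimality. Hence K lies in perp Q, the strict inclusion K -> Y vanishes, and Y = Y/0 lies in
  Q.
*)

theory Submission
  imports Defs "HOL-Library.Function_Algebras"
begin

section \<open>Modules, submodules and homomorphisms\<close>

definition mneg :: "('m, 'l::ring_1) rmod \<Rightarrow> 'm \<Rightarrow> 'm" where
  "mneg M x = rm_act M x (-1)"

context
  fixes M :: "('m, 'l::ring_1) rmod"
  assumes M: "rmodule M"
begin

lemma rm_add_closed [simp]: "x \<in> rm_carrier M \<Longrightarrow> y \<in> rm_carrier M \<Longrightarrow> rm_add M x y \<in> rm_carrier M"
  using M unfolding rmodule_def by (elim conjE) (blast | simp)

lemma rm_act_closed [simp]: "x \<in> rm_carrier M \<Longrightarrow> rm_act M x a \<in> rm_carrier M"
  using M unfolding rmodule_def by (elim conjE) (blast | simp)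

lemma rm_zero_closed [simp]: "rm_zero M \<in> rm_carrier M"
  using M unfolding rmodule_def by (elim conjE) (blast | simp)

lemma rm_zero_add [simp]: "x \<in> rm_carrier M \<Longrightarrow> rm_add M (rm_zero M) x = x"
  using M unfolding rmodule_def by (elim conjE) (blast | simp)

lemma rm_act_add: "x \<in> rm_carrier M \<Longrightarrow> y \<in> rm_carrier M \<Longrightarrow>
    rm_act M (rm_add M x y) a = rm_add M (rm_act M x a) (rm_act M y a)"
  using M unfolding rmodule_def by (elim conjE) (blast | simp)

lemma rm_act_distrib:
  "x \<in> rm_carrier M \<Longrightarrow> rm_act M x (a + b) = rm_add M (rm_act M x a) (rm_act M x b)"
  using M unfolding rmodule_def by (elim conjE) (blast | simp)

lemma rm_act_mult: "x \<in> rm_carrier M \<Longrightarrow> rm_act M x (a * b) = rm_act M (rm_act M x a) b"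
  using M unfolding rmodule_def by (elim conjE) (blast | simp)

lemma rm_act_one [simp]: "x \<in> rm_carrier M \<Longrightarrow> rm_act M x 1 = x"
  using M unfolding rmodule_def by (elim conjE) (blast | simp)

lemma rm_add_assoc: "x \<in> rm_carrier M \<Longrightarrow> y \<in> rm_carrier M \<Longrightarrow> z \<in> rm_carrier M \<Longrightarrow>
    rm_add M (rm_add M x y) z = rm_add M x (rm_add M y z)"
  using M unfolding rmodule_def by (elim conjE) (blast | simp)

lemma rm_add_commute: "x \<in> rm_carrier M \<Longrightarrow> y \<in> rm_carrier M \<Longrightarrow> rm_add M x y = rm_add M y x"
  using M unfolding rmodule_def by (elim conjE) (blast | simp)

lemma rm_add_inverse: "x \<in> rm_carrier M \<Longrightarrow> \<exists>y\<in>rm_carrier M. rm_add M x y = rm_zero M"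
  using M unfolding rmodule_def by (elim conjE) (blast | simp)

lemma rm_add_zero [simp]: "x \<in> rm_carrier M \<Longrightarrow> rm_add M x (rm_zero M) = x"
  using rm_add_commute[of x "rm_zero M"] by simp

lemma rm_add_left_cancel:
  assumes "x \<in> rm_carrier M" "y \<in> rm_carrier M" "z \<in> rm_carrier M"
    and "rm_add M x y = rm_add M x z"
  shows "y = z"
proof -
  obtain x' where x': "x' \<in> rm_carrier M" "rm_add M x x' = rm_zero M"
    using rm_add_inverse assms(1) by blast
  then have x'x: "rm_add M x' x = rm_zero M" using rm_add_commute assms(1) by simp
  have "y = rm_add M (rm_add M x' x) y" using x'x assms(2) by simp
  also have "\<dots> = rm_add M x' (rm_add M x y)" using x'(1) assms(1,2) by (rule rm_add_assoc)
  also have "\<dots> = rm_add M (rm_add M x' x) z" using x'(1) assms(1,3,4) by (simp add: rm_add_assoc)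
  also have "\<dots> = z" using x'x assms(3) by simp
  finally show ?thesis .
qed

lemma rm_add_idem_zero: "x \<in> rm_carrier M \<Longrightarrow> rm_add M x x = x \<Longrightarrow> x = rm_zero M"
  using rm_add_left_cancel[of x x "rm_zero M"] by simp

lemma rm_act_zero [simp]: "x \<in> rm_carrier M \<Longrightarrow> rm_act M x 0 = rm_zero M"
  using rm_act_distrib[of x 0 0] rm_add_idem_zero[of "rm_act M x 0"] by simp

lemma rm_zero_act [simp]: "rm_act M (rm_zero M) a = rm_zero M"
  using rm_act_add[of "rm_zero M" "rm_zero M" a] rm_add_idem_zero[of "rm_act M (rm_zero M) a"]
  by simp

lemma mneg_closed [simp]: "x \<in> rm_carrier M \<Longrightarrow> mneg M x \<in> rm_carrier M"
  unfolding mneg_def by simp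

lemma rm_add_mneg [simp]: "x \<in> rm_carrier M \<Longrightarrow> rm_add M x (mneg M x) = rm_zero M"
  unfolding mneg_def using rm_act_distrib[of x 1 "-1"] by simp

lemma rm_add_mneg_eq_zero_iff:
  assumes "x \<in> rm_carrier M" "y \<in> rm_carrier M"
  shows "rm_add M x (mneg M y) = rm_zero M \<longleftrightarrow> x = y"
proof
  assume "rm_add M x (mneg M y) = rm_zero M"
  then have "rm_add M (mneg M y) x = rm_add M (mneg M y) y"
    using assms rm_add_commute by simp
  then show "x = y" using rm_add_left_cancel assms by (meson mneg_closed)
qed (use assms in simp)

lemma rm_add_left_commute:
  "x \<in> rm_carrier M \<Longrightarrow> y \<in> rm_carrier M \<Longrightarrow> z \<in> rm_carrier M \<Longrightarrow>
    rm_add M x (rm_add M y z) = rm_add M y (rm_add M x z)"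
  using rm_add_assoc[of x y z] rm_add_assoc[of y x z] rm_add_commute[of x y] by simp

lemma rm_add_swap:
  assumes "a \<in> rm_carrier M" "b \<in> rm_carrier M" "c \<in> rm_carrier M" "d \<in> rm_carrier M"
  shows "rm_add M (rm_add M a b) (rm_add M c d) = rm_add M (rm_add M a c) (rm_add M b d)"
  using assms by (simp add: rm_add_assoc rm_add_left_commute[of b c])

end

lemma submodule_carrier: "rmodule M \<Longrightarrow> submodule M (rm_carrier M)"
  and submodule_zero: "rmodule M \<Longrightarrow> submodule M {rm_zero M}"
  and submodule_Int: "submodule M A \<Longrightarrow> submodule M B \<Longrightarrow> submodule M (A \<inter> B)"
  unfolding submodule_def by auto

lemma submodule_subset: "submodule M N \<Longrightarrow> N \<subseteq> rm_carrier M"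
  and submodule_zero_mem: "submodule M N \<Longrightarrow> rm_zero M \<in> N"
  and submodule_add: "submodule M N \<Longrightarrow> x \<in> N \<Longrightarrow> y \<in> N \<Longrightarrow> rm_add M x y \<in> N"
  and submodule_act: "submodule M N \<Longrightarrow> x \<in> N \<Longrightarrow> rm_act M x a \<in> N"
  and submodule_mneg: "submodule M N \<Longrightarrow> x \<in> N \<Longrightarrow> mneg M x \<in> N"
  unfolding submodule_def mneg_def by blast+

lemma restr_simps [simp]:
  "rm_carrier (restr M N) = N" "rm_add (restr M N) = rm_add M" "rm_zero (restr M N) = rm_zero M"
  "rm_act (restr M N) = rm_act M" "restr (restr M A) B = restr M B" "restr M (rm_carrier M) = M"
  unfolding restr_def by auto

lemma rmodule_restr:
  assumes "rmodule M" "submodule M N"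
  shows "rmodule (restr M N)"
proof -
  have N: "N \<subseteq> rm_carrier M" using assms(2) by (rule submodule_subset)
  have "\<forall>x\<in>N. \<exists>y\<in>N. rm_add M x y = rm_zero M"
    using submodule_mneg[OF assms(2)] rm_add_mneg[OF assms(1)] N by blast
  moreover have "\<forall>x\<in>N. \<forall>y\<in>N. rm_add M x y \<in> N" "\<forall>x\<in>N. \<forall>a. rm_act M x a \<in> N"
    using assms(2) by (simp_all add: submodule_def)
  ultimately show ?thesis
    using N assms(1) submodule_zero_mem[OF assms(2)]
    unfolding rmodule_def restr_simps by (meson subsetD)
qed

lemma submodule_if_rmodule_restr: "rmodule (restr M A) \<Longrightarrow> A \<subseteq> rm_carrier M \<Longrightarrow> submodule M A"
  unfolding rmodule_def submodule_def by simp

lemma submodule_restr_iff: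
  "A \<subseteq> rm_carrier M \<Longrightarrow> submodule (restr M A) B \<longleftrightarrow> submodule M B \<and> B \<subseteq> A"
  unfolding submodule_def by auto

lemma rhom_closed: "rhom M N f \<Longrightarrow> x \<in> rm_carrier M \<Longrightarrow> f x \<in> rm_carrier N"
  and rhom_add: "rhom M N f \<Longrightarrow> x \<in> rm_carrier M \<Longrightarrow> y \<in> rm_carrier M \<Longrightarrow>
    f (rm_add M x y) = rm_add N (f x) (f y)"
  and rhom_act: "rhom M N f \<Longrightarrow> x \<in> rm_carrier M \<Longrightarrow> f (rm_act M x a) = rm_act N (f x) a"
  and rhom_mneg: "rhom M N f \<Longrightarrow> x \<in> rm_carrier M \<Longrightarrow> f (mneg M x) = mneg N (f x)"
  unfolding rhom_def mneg_def by blast+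

lemma rhom_zero:
  assumes "rmodule M" "rmodule N" "rhom M N f"
  shows "f (rm_zero M) = rm_zero N"
proof -
  have "rm_add N (f (rm_zero M)) (f (rm_zero M)) = f (rm_zero M)"
    using rhom_add[OF assms(3), of "rm_zero M" "rm_zero M"] assms(1) by simp
  then show ?thesis
    using rm_add_idem_zero[OF assms(2)] rhom_closed[OF assms(3)] assms(1) by simp
qed

lemma rhom_comp: "rhom M N f \<Longrightarrow> rhom N Z g \<Longrightarrow> rhom M Z (g \<circ> f)"
  unfolding rhom_def by auto

lemma rhom_restr_dom: "rhom M N f \<Longrightarrow> A \<subseteq> rm_carrier M \<Longrightarrow> rhom (restr M A) N f"
  unfolding rhom_def by (simp add: subset_iff)

lemma rhom_restr_cod_iff:
  "B \<subseteq> rm_carrier N \<Longrightarrow> rhom M (restr N B) f \<longleftrightarrow> rhom M N f \<and> f ` rm_carrier M \<subseteq> B"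
  unfolding rhom_def by auto

lemma rhom_restr_cod: "rhom M N f \<Longrightarrow> f ` rm_carrier M \<subseteq> B \<Longrightarrow> rhom M (restr N B) f"
  unfolding rhom_def by auto

lemma rhom_inclusion: "submodule M A \<Longrightarrow> rhom (restr M A) M id"
  unfolding rhom_def submodule_def by auto

lemma submodule_image:
  assumes "rmodule M" "rmodule N" "rhom M N f" "submodule M A"
  shows "submodule N (f ` A)"
proof -
  have A: "A \<subseteq> rm_carrier M" using assms(4) by (rule submodule_subset)
  have "rm_zero N \<in> f ` A"
    using rhom_zero[OF assms(1-3)] submodule_zero_mem[OF assms(4)] by (metis imageI)
  moreover have "rm_add N (f a) (f b) \<in> f ` A" if "a \<in> A" "b \<in> A" for a b
    using rhom_add[OF assms(3)] submodule_add[OF assms(4)] that A by (metis image_eqI subsetD)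
  moreover have "rm_act N (f a) r \<in> f ` A" if "a \<in> A" for a r
    using rhom_act[OF assms(3)] submodule_act[OF assms(4)] that A by (metis image_eqI subsetD)
  ultimately show ?thesis
    unfolding submodule_def using rhom_closed[OF assms(3)] A by blast
qed

lemma submodule_preimage:
  assumes "rmodule M" "rmodule N" "rhom M N f" "submodule N B"
  shows "submodule M {x \<in> rm_carrier M. f x \<in> B}"
  using assms rhom_zero[OF assms(1-3)] submodule_zero_mem[OF assms(4)]
  unfolding submodule_def rhom_def by auto

lemma submodule_kern:
  assumes "rmodule M" "rmodule N" "rhom M N f"
  shows "submodule M (kern M N f)"
  using submodule_preimage[OF assms submodule_zero[OF assms(2)]] unfolding kern_def by simp

lemma kern_restr_cod [simp]: "kern M (restr N B) f = kern M N f"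
  unfolding kern_def by simp

lemma kern_restr_dom: "A \<subseteq> rm_carrier M \<Longrightarrow> kern (restr M A) N f = A \<inter> kern M N f"
  unfolding kern_def by auto

lemma short_exact_kernel_image:
  assumes "rhom Y Z h" "D \<subseteq> rm_carrier Y"
  shows "short_exact (restr Y {x \<in> D. h x = rm_zero Z}) id (restr Y D) h (restr Z (h ` D))"
  using assms unfolding short_exact_def rhom_def kern_def by (auto simp: subset_iff)

lemma rhom_eq_iff_diff_in_kern:
  assumes "rmodule M" "rmodule N" "rhom M N f" "x \<in> rm_carrier M" "y \<in> rm_carrier M"
  shows "f x = f y \<longleftrightarrow> rm_add M x (mneg M y) \<in> kern M N f"
proof -
  have "f (rm_add M x (mneg M y)) = rm_add N (f x) (mneg N (f y))"
    using rhom_add[OF assms(3,4) mneg_closed[OF assms(1,5)]] rhom_mneg[OF assms(3,5)] by simp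
  moreover have "f x \<in> rm_carrier N" "f y \<in> rm_carrier N"
    using assms(3-5) by (simp_all add: rhom_closed)
  ultimately show ?thesis
    using assms(1,4,5) rm_add_mneg_eq_zero_iff[OF assms(2)] unfolding kern_def by simp
qed

lemma inj_on_iff_kern:
  assumes "rmodule M" "rmodule N" "rhom M N f"
  shows "inj_on f (rm_carrier M) \<longleftrightarrow> kern M N f = {rm_zero M}"
proof
  assume inj: "inj_on f (rm_carrier M)"
  have "x = rm_zero M" if "x \<in> kern M N f" for x
    using inj_onD[OF inj] that rhom_zero[OF assms] assms(1) unfolding kern_def by simp
  moreover have "rm_zero M \<in> kern M N f"
    using rhom_zero[OF assms] assms(1) unfolding kern_def by simp
  ultimately show "kern M N f = {rm_zero M}" by blast
next
  assume ker: "kern M N f = {rm_zero M}"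
  show "inj_on f (rm_carrier M)"
  proof (rule inj_onI)
    fix x y assume "x \<in> rm_carrier M" "y \<in> rm_carrier M" "f x = f y"
    then show "x = y"
      using rhom_eq_iff_diff_in_kern[OF assms] rm_add_mneg_eq_zero_iff[OF assms(1)] ker by simp
  qed
qed

lemma rmodule_modL: "X \<in> modL \<Longrightarrow> rmodule X"
  unfolding modL_def by blast

lemma fin_gen_surj_image:
  assumes M: "rmodule M" and Z: "rmodule Z" and fg: "fin_gen M"
    and h: "rhom M Z h" and h_surj: "h ` rm_carrier M = rm_carrier Z"
  shows "fin_gen Z"
proof -
  obtain S where S: "finite S" "S \<subseteq> rm_carrier M"
    and gen: "\<forall>N. submodule M N \<and> S \<subseteq> N \<longrightarrow> rm_carrier M \<subseteq> N"
    using fg unfolding fin_gen_def by (elim exE conjE) (rule that)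
  have "rm_carrier Z \<subseteq> N" if "submodule Z N" "h ` S \<subseteq> N" for N
  proof -
    have "rm_carrier M \<subseteq> {x \<in> rm_carrier M. h x \<in> N}"
      using that S(2) by (intro gen[rule_format] conjI submodule_preimage[OF M Z h]) auto
    then show ?thesis unfolding h_surj [symmetric] by blast
  qed
  moreover have "h ` S \<subseteq> rm_carrier Z" using S(2) h_surj by blast
  ultimately show ?thesis using S(1) unfolding fin_gen_def by blast
qed

lemma modL_surj_image:
  "M \<in> modL \<Longrightarrow> rmodule Z \<Longrightarrow> rhom M Z h \<Longrightarrow> h ` rm_carrier M = rm_carrier Z \<Longrightarrow> Z \<in> modL"
  using fin_gen_surj_image unfolding modL_def by blast

section \<open>Quotient modules and induced maps\<close>

lemma rmodule_surj_hom_image: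
  assumes M: "rmodule M" and r: "rhom M N r" and surj: "r ` rm_carrier M = rm_carrier N"
    and zero: "r (rm_zero M) = rm_zero N"
  shows "rmodule N"
proof -
  have add: "rm_add N (r x) (r y) = r (rm_add M x y)"
    if "x \<in> rm_carrier M" "y \<in> rm_carrier M" for x y
    using rhom_add[OF r that] by simp
  have act: "rm_act N (r x) a = r (rm_act M x a)" if "x \<in> rm_carrier M" for x a
    using rhom_act[OF r that] by simp
  have "\<exists>y\<in>rm_carrier M. r (rm_add M x y) = r (rm_zero M)" if "x \<in> rm_carrier M" for x
    using M that by (intro bexI[of _ "mneg M x"]) simp_all
  with M add act show ?thesis
    unfolding rmodule_def surj [symmetric] zero [symmetric]
    by (auto simp: rm_add_assoc rm_act_add rm_act_distrib rm_act_mult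
        intro: arg_cong[of _ _ r] rm_add_commute)
qed

definition quot_rel :: "('m, 'l::ring_1) rmod \<Rightarrow> 'm set \<Rightarrow> 'm \<Rightarrow> 'm \<Rightarrow> bool" where
  "quot_rel M N x y \<longleftrightarrow> x \<in> rm_carrier M \<and> y \<in> rm_carrier M \<and> (\<exists>n\<in>N. x = rm_add M y n)"

definition quot_map :: "('m, 'l::ring_1) rmod \<Rightarrow> 'm set \<Rightarrow> 'm \<Rightarrow> 'm" where
  "quot_map M N x = (SOME y. quot_rel M N x y)"

text \<open>An element of M/N is a chosen representative of its coset, so that M/N lives on the
  carrier type of M.\<close>
definition quot :: "('m, 'l::ring_1) rmod \<Rightarrow> 'm set \<Rightarrow> ('m, 'l) rmod" where
  "quot M N = \<lparr>rm_carrier = quot_map M N ` rm_carrier M,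
     rm_add = \<lambda>a b. quot_map M N (rm_add M a b), rm_zero = quot_map M N (rm_zero M),
     rm_act = \<lambda>a r. quot_map M N (rm_act M a r)\<rparr>"

lemma quot_simps [simp]:
  "rm_carrier (quot M N) = quot_map M N ` rm_carrier M"
  "rm_add (quot M N) = (\<lambda>a b. quot_map M N (rm_add M a b))"
  "rm_zero (quot M N) = quot_map M N (rm_zero M)"
  "rm_act (quot M N) = (\<lambda>a r. quot_map M N (rm_act M a r))"
  unfolding quot_def by simp_all

context
  fixes M :: "('m, 'l::ring_1) rmod" and N :: "'m set"
  assumes M: "rmodule M" and N: "submodule M N"
begin

lemma quot_rel_refl: "x \<in> rm_carrier M \<Longrightarrow> quot_rel M N x x"
  unfolding quot_rel_def using M submodule_zero_mem[OF N] by (auto intro!: bexI[of _ "rm_zero M"])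

lemma quot_rel_sym:
  assumes "quot_rel M N x y"
  shows "quot_rel M N y x"
proof -
  obtain n where n: "n \<in> N" "x = rm_add M y n" and C: "y \<in> rm_carrier M"
    using assms unfolding quot_rel_def by blast
  have nC: "n \<in> rm_carrier M" using n(1) submodule_subset[OF N] by blast
  have "y = rm_add M x (mneg M n)"
    using n(2) nC C M by (simp add: rm_add_assoc)
  then show ?thesis
    using assms submodule_mneg[OF N n(1)] unfolding quot_rel_def by blast
qed

lemma quot_rel_trans:
  assumes "quot_rel M N x y" "quot_rel M N y z"
  shows "quot_rel M N x z"
proof -
  obtain n m where nm: "n \<in> N" "m \<in> N" and eq: "x = rm_add M y n" "y = rm_add M z m"
    and C: "x \<in> rm_carrier M" "z \<in> rm_carrier M"
    using assms unfolding quot_rel_def by blast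
  have "n \<in> rm_carrier M" "m \<in> rm_carrier M"
    using nm submodule_subset[OF N] by blast+
  then have "x = rm_add M z (rm_add M m n)"
    unfolding eq using C(2) by (intro rm_add_assoc[OF M])
  moreover have "rm_add M m n \<in> N" using nm(2,1) by (rule submodule_add[OF N])
  ultimately show ?thesis unfolding quot_rel_def using C by blast
qed

lemma quot_rel_add:
  assumes "quot_rel M N x x'" "quot_rel M N y y'"
  shows "quot_rel M N (rm_add M x y) (rm_add M x' y')"
proof -
  obtain n m where nm: "n \<in> N" "m \<in> N" and eq: "x = rm_add M x' n" "y = rm_add M y' m"
    and C: "x' \<in> rm_carrier M" "y' \<in> rm_carrier M"
    using assms unfolding quot_rel_def by blast
  have nmC: "n \<in> rm_carrier M" "m \<in> rm_carrier M"
    using nm submodule_subset[OF N] by blast+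
  have "rm_add M x y = rm_add M (rm_add M x' y') (rm_add M n m)"
    unfolding eq using C nmC by (intro rm_add_swap[OF M])
  moreover have "rm_add M n m \<in> N" using nm by (rule submodule_add[OF N])
  ultimately have "\<exists>k\<in>N. rm_add M x y = rm_add M (rm_add M x' y') k" by blast
  then show ?thesis unfolding quot_rel_def using eq C nmC M by simp
qed

lemma quot_rel_act:
  assumes "quot_rel M N x x'"
  shows "quot_rel M N (rm_act M x a) (rm_act M x' a)"
proof -
  obtain n where n: "n \<in> N" "x = rm_add M x' n" and C: "x' \<in> rm_carrier M"
    using assms unfolding quot_rel_def by blast
  have nC: "n \<in> rm_carrier M" using n(1) submodule_subset[OF N] by blast
  have "rm_act M x a = rm_add M (rm_act M x' a) (rm_act M n a)"
    unfolding n(2) using C nC by (rule rm_act_add[OF M])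
  moreover have "rm_act M n a \<in> N" using n(1) by (rule submodule_act[OF N])
  ultimately have "\<exists>k\<in>N. rm_act M x a = rm_add M (rm_act M x' a) k" by blast
  then show ?thesis unfolding quot_rel_def using n(2) C nC M by simp
qed

lemma quot_rel_quot_map: "x \<in> rm_carrier M \<Longrightarrow> quot_rel M N x (quot_map M N x)"
  unfolding quot_map_def by (rule someI) (rule quot_rel_refl)

lemma quot_map_eq_iff:
  assumes "x \<in> rm_carrier M" "y \<in> rm_carrier M"
  shows "quot_map M N x = quot_map M N y \<longleftrightarrow> quot_rel M N x y"
proof
  assume "quot_map M N x = quot_map M N y"
  then show "quot_rel M N x y"
    using quot_rel_quot_map assms quot_rel_sym quot_rel_trans by metis
next
  assume "quot_rel M N x y"
  then have "quot_rel M N x = quot_rel M N y"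
    using quot_rel_sym quot_rel_trans by blast
  then show "quot_map M N x = quot_map M N y" unfolding quot_map_def by simp
qed

lemma quot_map_cong: "quot_rel M N x y \<Longrightarrow> quot_map M N x = quot_map M N y"
  using quot_map_eq_iff unfolding quot_rel_def by blast

lemma rhom_quot_map: "rhom M (quot M N) (quot_map M N)"
  unfolding rhom_def quot_simps
  using quot_rel_add quot_rel_act quot_rel_quot_map
  by (auto intro!: quot_map_cong)

lemma quot_map_zero_iff:
  assumes "x \<in> rm_carrier M"
  shows "quot_map M N x = rm_zero (quot M N) \<longleftrightarrow> x \<in> N"
proof -
  have "(\<exists>n\<in>N. x = rm_add M (rm_zero M) n) \<longleftrightarrow> x \<in> N"
    using assms M submodule_subset[OF N] by (metis rm_zero_add subsetD)
  then show ?thesis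
    using quot_map_eq_iff[OF assms rm_zero_closed[OF M]] assms M unfolding quot_rel_def by simp
qed

lemma kern_quot_map: "kern M (quot M N) (quot_map M N) = N"
  using quot_map_zero_iff submodule_subset[OF N] unfolding kern_def by blast

lemma rmodule_quot: "rmodule (quot M N)"
  using rmodule_surj_hom_image[OF M rhom_quot_map] by simp

end

lemma quot_carrier_trivial:
  assumes "rmodule Y"
  shows "rm_carrier (quot Y (rm_carrier Y)) = {rm_zero (quot Y (rm_carrier Y))}"
  using quot_map_zero_iff[OF assms submodule_carrier[OF assms]] rm_zero_closed[OF assms]
  by (auto simp del: quot_simps(3))

definition factor_through :: "('m, 'l) rmod \<Rightarrow> ('m \<Rightarrow> 'n) \<Rightarrow> ('m \<Rightarrow> 'o) \<Rightarrow> 'n \<Rightarrow> 'o" where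
  "factor_through B g h = (\<lambda>c. h (inv_into (rm_carrier B) g c))"

context
  fixes B :: "('m, 'l::ring_1) rmod" and C :: "('n, 'l) rmod" and Z :: "('o, 'l) rmod"
    and g :: "'m \<Rightarrow> 'n" and h :: "'m \<Rightarrow> 'o"
  assumes B: "rmodule B" and C: "rmodule C" and Z: "rmodule Z"
    and g: "rhom B C g" and g_surj: "g ` rm_carrier B = rm_carrier C"
    and h: "rhom B Z h" and kern_le: "kern B C g \<subseteq> kern B Z h"
begin

lemma factor_through_apply: "b \<in> rm_carrier B \<Longrightarrow> factor_through B g h (g b) = h b"
proof -
  assume b: "b \<in> rm_carrier B"
  define b' where "b' = inv_into (rm_carrier B) g (g b)"
  have b': "b' \<in> rm_carrier B" "g b' = g b"
    using b unfolding b'_def by (simp_all add: inv_into_into f_inv_into_f)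
  then have "rm_add B b' (mneg B b) \<in> kern B Z h"
    using kern_le rhom_eq_iff_diff_in_kern[OF B C g] b by blast
  then show ?thesis
    using rhom_eq_iff_diff_in_kern[OF B Z h b'(1) b] unfolding factor_through_def b'_def by simp
qed

lemma factor_through_image: "factor_through B g h ` rm_carrier C = h ` rm_carrier B"
  unfolding g_surj [symmetric] image_image by (rule image_cong) (simp_all add: factor_through_apply)

lemma rhom_factor_through: "rhom C Z (factor_through B g h)"
proof -
  have "rm_add C (g b) (g b') = g (rm_add B b b')" "rm_act C (g b) a = g (rm_act B b a)"
    if "b \<in> rm_carrier B" "b' \<in> rm_carrier B" for b b' a
    using that rhom_add[OF g] rhom_act[OF g] by simp_all
  then show ?thesis
    unfolding rhom_def g_surj [symmetric]
    using B factor_through_apply rhom_closed[OF h] rhom_add[OF h] rhom_act[OF h] by simp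
qed

lemma kern_factor_through: "kern C Z (factor_through B g h) = g ` kern B Z h"
  unfolding kern_def g_surj [symmetric] using factor_through_apply by auto

end

lemma rhom_inv_into:
  assumes A: "rmodule A" and W: "rmodule W"
    and \<phi>: "rhom A W \<phi>" "bij_betw \<phi> (rm_carrier A) (rm_carrier W)"
  shows "rhom W A (inv_into (rm_carrier A) \<phi>)"
proof -
  have "kern A W \<phi> \<subseteq> kern A A id"
    using inj_on_iff_kern[OF A W \<phi>(1)] \<phi>(2) A unfolding bij_betw_def kern_def by auto
  moreover have "rhom A A id" by (simp add: rhom_def)
  ultimately have "rhom W A (factor_through A \<phi> id)"
    using rhom_factor_through[OF A W A \<phi>(1) bij_betw_imp_surj_on[OF \<phi>(2)]] by blast
  then show ?thesis unfolding factor_through_def by simp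
qed

lemma quot_projection:
  assumes Y: "rmodule Y" and L: "submodule Y L" and K: "submodule Y K" and LK: "L \<subseteq> K"
  defines "q \<equiv> factor_through Y (quot_map Y L) (quot_map Y K)"
  shows "rhom (quot Y L) (quot Y K) q" "q ` rm_carrier (quot Y L) = rm_carrier (quot Y K)"
    "kern (quot Y L) (quot Y K) q = quot_map Y L ` K"
proof -
  have "kern Y (quot Y L) (quot_map Y L) \<subseteq> kern Y (quot Y K) (quot_map Y K)"
    using LK by (simp add: kern_quot_map Y L K)
  note factor = Y rmodule_quot[OF Y L] rmodule_quot[OF Y K] rhom_quot_map[OF Y L]
    quot_simps(1)[symmetric] rhom_quot_map[OF Y K] this
  show "rhom (quot Y L) (quot Y K) q" "q ` rm_carrier (quot Y L) = rm_carrier (quot Y K)"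
    "kern (quot Y L) (quot Y K) q = quot_map Y L ` K"
    unfolding q_def using rhom_factor_through[OF factor] factor_through_image[OF factor]
      kern_factor_through[OF factor] by (simp_all add: kern_quot_map Y K)
qed

lemma image_embeds_into_quot:
  assumes Y: "rmodule Y" and K: "submodule Y K" and W: "rmodule W" and h: "rhom (restr Y K) W h"
  defines "L \<equiv> kern (restr Y K) W h"
  defines "i \<equiv> factor_through (restr Y K) h (quot_map Y L)"
  shows "rhom (restr W (h ` K)) (quot Y L) i" "inj_on i (h ` K)" "i ` h ` K = quot_map Y L ` K"
proof -
  have YK: "rmodule (restr Y K)" using rmodule_restr[OF Y K] .
  have hK: "submodule W (h ` K)" using submodule_image[OF YK W h submodule_carrier[OF YK]] by simp
  have L: "submodule Y L" "L \<subseteq> K"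
    using submodule_kern[OF YK W h] submodule_restr_iff[OF submodule_subset[OF K]]
    unfolding L_def by auto
  have kern_L: "kern (restr Y K) (quot Y L) (quot_map Y L) = L"
    using kern_restr_dom[OF submodule_subset[OF K], of "quot Y L" "quot_map Y L"]
      kern_quot_map[OF Y L(1)] L(2) by auto
  then have kern_le:
    "kern (restr Y K) (restr W (h ` K)) h \<subseteq> kern (restr Y K) (quot Y L) (quot_map Y L)"
    by (simp add: L_def)
  have h': "rhom (restr Y K) (restr W (h ` K)) h" using rhom_restr_cod[OF h] by simp
  have h'_surj: "h ` rm_carrier (restr Y K) = rm_carrier (restr W (h ` K))" by simp
  note factor = YK rmodule_restr[OF W hK] rmodule_quot[OF Y L(1)] h' h'_surj
    rhom_restr_dom[OF rhom_quot_map[OF Y L(1)] submodule_subset[OF K]] kern_le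
  have "kern (restr W (h ` K)) (quot Y L) i = h ` L"
    using kern_factor_through[OF factor] kern_L unfolding i_def by simp
  moreover have "h ` L = {rm_zero W}"
    using rhom_zero[OF YK W h] submodule_zero_mem[OF L(1)] unfolding L_def kern_def by auto
  ultimately show "inj_on i (h ` K)"
    using inj_on_iff_kern[OF rmodule_restr[OF W hK] rmodule_quot[OF Y L(1)]]
      rhom_factor_through[OF factor] unfolding i_def by simp
  show "rhom (restr W (h ` K)) (quot Y L) i" "i ` h ` K = quot_map Y L ` K"
    using rhom_factor_through[OF factor] factor_through_image[OF factor] unfolding i_def by simp_all
qed

section \<open>Finite length over a finite dimensional algebra\<close>

fun lincomb :: "('m, 'l::ring_1) rmod \<Rightarrow> (nat \<Rightarrow> 'm) \<Rightarrow> (nat \<Rightarrow> 'l) \<Rightarrow> nat \<Rightarrow> 'm" where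
  "lincomb M s f 0 = rm_zero M"
| "lincomb M s f (Suc n) = rm_add M (lincomb M s f n) (rm_act M (s n) (f n))"

definition coord_vec :: "nat \<Rightarrow> 'l::zero \<Rightarrow> nat \<Rightarrow> 'l" where
  "coord_vec j x = (\<lambda>i. if i = j then x else 0)"

definition coeff_vecs :: "nat \<Rightarrow> (nat \<Rightarrow> 'l::zero) set" where
  "coeff_vecs n = {f. \<forall>i\<ge>n. f i = 0}"

lemma coeff_vecs_add: "f \<in> coeff_vecs n \<Longrightarrow> g \<in> coeff_vecs n \<Longrightarrow> f + g \<in> coeff_vecs n"
  and coeff_vecs_mult: "f \<in> coeff_vecs n \<Longrightarrow> (\<lambda>i. f i * a) \<in> coeff_vecs n"
  and coeff_vecs_zero: "0 \<in> coeff_vecs n"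
  and coeff_vecs_coord_vec: "j < n \<Longrightarrow> coord_vec j x \<in> coeff_vecs n"
  for f g :: "nat \<Rightarrow> 'l::ring_1"
  unfolding coeff_vecs_def coord_vec_def by simp_all

context
  fixes M :: "('m, 'l::ring_1) rmod" and s :: "nat \<Rightarrow> 'm"
  assumes M: "rmodule M" and s: "\<And>i. s i \<in> rm_carrier M"
begin

lemma lincomb_closed: "lincomb M s f n \<in> rm_carrier M"
  by (induction n) (simp_all add: M s)

lemma lincomb_add: "lincomb M s (f + g) n = rm_add M (lincomb M s f n) (lincomb M s g n)"
  by (induction n) (simp_all add: M s lincomb_closed rm_act_distrib rm_add_swap)

lemma lincomb_act: "rm_act M (lincomb M s f n) a = lincomb M s (\<lambda>i. f i * a) n"
  by (induction n) (simp_all add: M s lincomb_closed rm_act_add rm_act_mult)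

lemma lincomb_zero: "lincomb M s 0 n = rm_zero M"
  by (induction n) (simp_all add: M s)

lemma lincomb_cong: "(\<And>i. i < n \<Longrightarrow> f i = g i) \<Longrightarrow> lincomb M s f n = lincomb M s g n"
  by (induction n) simp_all

lemma lincomb_coord_vec: "j < n \<Longrightarrow> lincomb M s (coord_vec j x) n = rm_act M (s j) x"
proof (induction n)
  case (Suc n)
  have "lincomb M s (coord_vec n x) n = rm_zero M"
    using lincomb_cong[of n "coord_vec n x" 0] lincomb_zero by (simp add: coord_vec_def)
  with Suc show ?case
    using M s by (cases "j = n") (auto simp: coord_vec_def less_Suc_eq)
qed simp

lemma submodule_lincombs: "submodule M {lincomb M s f n | f. f \<in> coeff_vecs n}"
  unfolding submodule_def
  using lincomb_closed lincomb_zero coeff_vecs_zero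
    lincomb_add coeff_vecs_add lincomb_act coeff_vecs_mult
  by (smt (verit) mem_Collect_eq subsetI)

end

lemma fin_gen_ex_lincombs:
  assumes M: "rmodule M" and fg: "fin_gen M"
  shows "\<exists>s n. (\<forall>i. s i \<in> rm_carrier M) \<and> rm_carrier M = {lincomb M s f n | f. f \<in> coeff_vecs n}"
proof -
  obtain S where S: "finite S" "S \<subseteq> rm_carrier M"
    and gen: "\<forall>N. submodule M N \<and> S \<subseteq> N \<longrightarrow> rm_carrier M \<subseteq> N"
    using fg unfolding fin_gen_def by (elim exE conjE) (rule that)
  obtain xs where xs: "set xs = S" using finite_list[OF S(1)] by blast
  define n where "n = length xs"
  define s where "s i = (if i < n then xs ! i else rm_zero M)" for i
  have s: "s i \<in> rm_carrier M" for i
    using S(2) M nth_mem[of i xs] xs unfolding s_def n_def by auto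
  let ?R = "{lincomb M s f n | f. f \<in> coeff_vecs n}"
  have "x \<in> ?R" if "x \<in> S" for x
  proof -
    obtain j where j: "j < n" "x = xs ! j"
      using \<open>x \<in> S\<close> xs in_set_conv_nth[of x xs] unfolding n_def by auto
    then have "x = s j" unfolding s_def by simp
    then have "x = lincomb M s (coord_vec j 1) n"
      using lincomb_coord_vec[OF M s j(1)] s[of j] M by simp
    then show ?thesis using coeff_vecs_coord_vec[OF j(1)] by blast
  qed
  then have "rm_carrier M \<subseteq> ?R"
    by (intro gen[rule_format] conjI submodule_lincombs[OF M s] subsetI)
  moreover have "?R \<subseteq> rm_carrier M" using lincomb_closed[OF M s] by auto
  ultimately show ?thesis using s by blast
qed

lemma (in vector_space) dim_psubset_finite_span:
  assumes "subspace S" "S \<subset> T" "T \<subseteq> span W" "finite W"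
  shows "dim S < dim T"
proof -
  obtain B where B: "B \<subseteq> S" "independent B" "S \<subseteq> span B" "card B = dim S"
    by (rule basis_exists)
  obtain BT where BT: "BT \<subseteq> T" "independent BT" "T \<subseteq> span BT" "card BT = dim T"
    by (rule basis_exists)
  obtain x where x: "x \<in> T" "x \<notin> S" using assms(2) by blast
  have "span B \<subseteq> S" using span_minimal[OF B(1) assms(1)] .
  then have xB: "x \<notin> span B" using x(2) by blast
  have fin: "finite BT"
    using independent_span_bound[OF assms(4) BT(2) subset_trans[OF BT(1) assms(3)]] by blast
  have BBT: "B \<subseteq> span BT" using B(1) psubset_imp_subset[OF assms(2)] BT(3) by blast
  then have "card (insert x B) \<le> card BT"
    using independent_span_bound[OF fin independent_insertI[OF xB B(2)]] x(1) BT(3) by blast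
  moreover have "x \<notin> B" using xB span_superset[of B] by blast
  moreover have "finite B" using independent_span_bound[OF fin B(2) BBT] by blast
  ultimately show ?thesis using B(4) BT(4) by simp
qed

lemma ex_maximal_by_nat_measure:
  fixes d :: "'a::order \<Rightarrow> nat"
  assumes "F \<noteq> {}" "\<And>N. N \<in> F \<Longrightarrow> d N < b"
    and "\<And>N N'. N \<in> F \<Longrightarrow> N' \<in> F \<Longrightarrow> N < N' \<Longrightarrow> d N < d N'"
  shows "\<exists>N\<in>F. \<forall>N'\<in>F. N \<le> N' \<longrightarrow> N' = N"
proof -
  obtain N where N: "N \<in> F" "\<And>N'. N' \<in> F \<Longrightarrow> d N' \<le> d N"
    using ex_has_greatest_nat[of "\<lambda>N. N \<in> F" _ d b] assms(1,2) by blast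
  have "N' = N" if "N' \<in> F" "N \<le> N'" for N'
    using assms(3)[OF N(1) that(1)] N(2)[OF that(1)] that(2) by (auto simp: less_le)
  then show ?thesis using N(1) by blast
qed

lemma ex_minimal_by_nat_measure:
  fixes d :: "'a::order \<Rightarrow> nat"
  assumes "F \<noteq> {}" and "\<And>N N'. N \<in> F \<Longrightarrow> N' \<in> F \<Longrightarrow> N < N' \<Longrightarrow> d N < d N'"
  shows "\<exists>N\<in>F. \<forall>N'\<in>F. N' \<le> N \<longrightarrow> N' = N"
proof -
  obtain N where N: "N \<in> F" "\<And>N'. N' \<in> F \<Longrightarrow> d N \<le> d N'"
    using ex_has_least_nat[of "\<lambda>N. N \<in> F" _ d] assms(1) by blast
  have "N' = N" if "N' \<in> F" "N' \<le> N" for N'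
    using assms(2)[OF that(1) N(1)] N(2)[OF that(1)] that(2) by (auto simp: less_le)
  then show ?thesis using N(1) by blast
qed

definition pointwise_scale :: "('k \<Rightarrow> 'l \<Rightarrow> 'l) \<Rightarrow> 'k \<Rightarrow> (nat \<Rightarrow> 'l) \<Rightarrow> nat \<Rightarrow> 'l" where
  "pointwise_scale sc c f = (\<lambda>i. sc c (f i))"

locale fin_dim_algebra =
  fixes sc :: "'k::field \<Rightarrow> 'l::ring_1 \<Rightarrow> 'l"
  assumes fd_algebra: "fd_algebra sc"
begin

definition basis :: "'l set" where
  "basis = (SOME B. finite_dimensional_vector_space sc B)"

lemma finite_dimensional_vector_space_basis: "finite_dimensional_vector_space sc basis"
  unfolding basis_def using fd_algebra unfolding fd_algebra_def by (blast intro: someI_ex)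

lemma scale_eq_mult: "sc c x = x * sc c 1"
  using fd_algebra unfolding fd_algebra_def by (metis mult_1_right)

end

sublocale fin_dim_algebra \<subseteq> L: finite_dimensional_vector_space sc basis
  by (rule finite_dimensional_vector_space_basis)

sublocale fin_dim_algebra \<subseteq> V: vector_space "pointwise_scale sc"
  by unfold_locales
    (simp_all add: pointwise_scale_def fun_eq_iff L.scale_right_distrib L.scale_left_distrib)

context fin_dim_algebra
begin

definition coord_basis :: "nat \<Rightarrow> (nat \<Rightarrow> 'l) set" where
  "coord_basis n = {coord_vec j b | j b. j < n \<and> b \<in> basis}"

lemma finite_coord_basis: "finite (coord_basis n)"
  unfolding coord_basis_def using L.finite_Basis by (intro finite_image_set2) simp_all

lemma coord_vec_in_span:
  assumes "j < n"
  shows "coord_vec j x \<in> V.span (coord_basis n)"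
proof -
  have "coord_vec j (0::'l) = 0" "coord_vec j (x + y) = coord_vec j x + coord_vec j y"
    "coord_vec j (sc c x) = pointwise_scale sc c (coord_vec j x)" for x y c
    by (simp_all add: coord_vec_def pointwise_scale_def fun_eq_iff)
  then have "L.subspace {x. coord_vec j x \<in> V.span (coord_basis n)}"
    by (intro L.subspaceI) (simp_all add: V.span_zero V.span_add V.span_scale)
  moreover have "basis \<subseteq> {x. coord_vec j x \<in> V.span (coord_basis n)}"
    using assms unfolding coord_basis_def by (auto intro: V.span_base)
  ultimately have "L.span basis \<subseteq> {x. coord_vec j x \<in> V.span (coord_basis n)}"
    by (intro L.span_minimal)
  then show ?thesis using L.span_Basis by auto
qed

lemma coeff_vecs_subset_span: "coeff_vecs n \<subseteq> V.span (coord_basis n)"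
proof (induction n)
  case 0
  have "coeff_vecs 0 = {0 :: nat \<Rightarrow> 'l}" by (auto simp: coeff_vecs_def fun_eq_iff)
  then show ?case by (simp add: V.span_zero)
next
  case (Suc n)
  have "f \<in> V.span (coord_basis (Suc n))" if "f \<in> coeff_vecs (Suc n)" for f
  proof -
    have "coord_basis n \<subseteq> coord_basis (Suc n)" unfolding coord_basis_def by force
    moreover have "f(n := 0) \<in> coeff_vecs n" using that by (auto simp: coeff_vecs_def)
    ultimately have "f(n := 0) \<in> V.span (coord_basis (Suc n))"
      using Suc V.span_mono by blast
    moreover have "f(n := 0) + coord_vec n (f n) = f"
      by (simp add: coord_vec_def fun_eq_iff)
    ultimately show ?thesis using V.span_add[OF _ coord_vec_in_span[OF lessI]] by metis
  qed
  then show ?case by blast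
qed

text \<open>If s generates M, a submodule N is recorded by the k-subspace of coefficient vectors f of
  length n with lincomb M s f n in N. This is strictly monotone in N, and all these subspaces lie
  in the finite dimensional space of coefficient vectors of length n, so their dimension bounds
  chains of submodules.\<close>
definition coeffs_in :: "('m, 'l) rmod \<Rightarrow> (nat \<Rightarrow> 'm) \<Rightarrow> nat \<Rightarrow> 'm set \<Rightarrow> (nat \<Rightarrow> 'l) set" where
  "coeffs_in M s n N = {f \<in> coeff_vecs n. lincomb M s f n \<in> N}"

context
  fixes M :: "('m, 'l) rmod" and s :: "nat \<Rightarrow> 'm" and n :: nat
  assumes M: "rmodule M" and s: "\<And>i. s i \<in> rm_carrier M"
    and gen: "rm_carrier M = {lincomb M s f n | f. f \<in> coeff_vecs n}"
begin

lemma ex_coeffs: "x \<in> rm_carrier M \<Longrightarrow> \<exists>f\<in>coeff_vecs n. lincomb M s f n = x"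
  using gen by auto

lemma subspace_coeffs_in:
  assumes N: "submodule M N"
  shows "V.subspace (coeffs_in M s n N)"
proof (rule V.subspaceI)
  show "0 \<in> coeffs_in M s n N"
    using lincomb_zero[of M s, OF M s] submodule_zero_mem[OF N] coeff_vecs_zero
    unfolding coeffs_in_def by simp
next
  fix f g assume "f \<in> coeffs_in M s n N" "g \<in> coeffs_in M s n N"
  then show "f + g \<in> coeffs_in M s n N"
    using lincomb_add[of M s, OF M s] submodule_add[OF N] coeff_vecs_add
    unfolding coeffs_in_def by auto
next
  fix c f assume f: "f \<in> coeffs_in M s n N"
  have "pointwise_scale sc c f = (\<lambda>i. f i * sc c 1)"
    unfolding pointwise_scale_def by (rule ext) (rule scale_eq_mult)
  moreover have "(\<lambda>i. f i * sc c 1) \<in> coeff_vecs n"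
    using f coeff_vecs_mult unfolding coeffs_in_def by blast
  ultimately show "pointwise_scale sc c f \<in> coeffs_in M s n N"
    using f lincomb_act[of M s, OF M s, symmetric] submodule_act[OF N]
    unfolding coeffs_in_def by simp
qed

lemma coeffs_in_subset_span: "coeffs_in M s n N \<subseteq> V.span (coord_basis n)"
  unfolding coeffs_in_def using coeff_vecs_subset_span by blast

lemma dim_coeffs_in_le: "V.dim (coeffs_in M s n N) \<le> card (coord_basis n)"
  using V.dim_le_card[OF coeffs_in_subset_span finite_coord_basis] .

lemma dim_coeffs_in_strict_mono:
  assumes N: "submodule M N" and N': "submodule M N'" and "N \<subset> N'"
  shows "V.dim (coeffs_in M s n N) < V.dim (coeffs_in M s n N')"
proof (rule V.dim_psubset_finite_span[OF subspace_coeffs_in[OF N] _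
      coeffs_in_subset_span finite_coord_basis])
  obtain x where x: "x \<in> N'" "x \<notin> N" using assms(3) by blast
  then obtain f where "f \<in> coeff_vecs n" "lincomb M s f n = x"
    using ex_coeffs submodule_subset[OF N'] by blast
  then have "f \<in> coeffs_in M s n N'" "f \<notin> coeffs_in M s n N"
    using x unfolding coeffs_in_def by simp_all
  moreover have "coeffs_in M s n N \<subseteq> coeffs_in M s n N'"
    using assms(3) unfolding coeffs_in_def by blast
  ultimately show "coeffs_in M s n N \<subset> coeffs_in M s n N'" by blast
qed

lemma fin_gen_restr:
  assumes N: "submodule M N"
  shows "fin_gen (restr M N)"
proof -
  obtain B where B: "B \<subseteq> coeffs_in M s n N" "V.independent B" "coeffs_in M s n N \<subseteq> V.span B"
    using V.maximal_independent_subset by blast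
  have "finite B"
    using V.independent_span_bound[OF finite_coord_basis B(2)] B(1) coeffs_in_subset_span by blast
  moreover have gens: "(\<lambda>f. lincomb M s f n) ` B \<subseteq> N"
    using B(1) unfolding coeffs_in_def by blast
  moreover have "N \<subseteq> N''" if "submodule M N''" "N'' \<subseteq> N" "(\<lambda>f. lincomb M s f n) ` B \<subseteq> N''" for N''
  proof -
    have "B \<subseteq> coeffs_in M s n N''" using B(1) that(3) unfolding coeffs_in_def by blast
    then have coeffs: "coeffs_in M s n N \<subseteq> coeffs_in M s n N''"
      using B(3) V.span_minimal subspace_coeffs_in[OF that(1)] by blast
    show "N \<subseteq> N''"
    proof
      fix x assume "x \<in> N"
      then obtain f where "f \<in> coeff_vecs n" "x = lincomb M s f n"
        using ex_coeffs submodule_subset[OF N] by blast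
      then show "x \<in> N''" using \<open>x \<in> N\<close> coeffs unfolding coeffs_in_def by blast
    qed
  qed
  ultimately show ?thesis
    unfolding fin_gen_def restr_simps submodule_restr_iff[OF submodule_subset[OF N]]
    by (intro exI[of _ "(\<lambda>f. lincomb M s f n) ` B"]) blast
qed

end

lemma modL_restr:
  fixes M :: "'l modl"
  assumes "M \<in> modL" "submodule M N"
  shows "restr M N \<in> modL"
proof -
  have M: "rmodule M" "fin_gen M" using assms(1) unfolding modL_def by simp_all
  obtain s n where s: "\<forall>i. s i \<in> rm_carrier M"
    and gen: "rm_carrier M = {lincomb M s f n | f. f \<in> coeff_vecs n}"
    using fin_gen_ex_lincombs[OF M] by blast
  have "fin_gen (restr M N)" using fin_gen_restr[OF M(1) s[rule_format] gen assms(2)] .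
  then show ?thesis using rmodule_restr[OF M(1) assms(2)] unfolding modL_def by simp
qed

lemma modL_submodule_measure:
  fixes M :: "'l modl"
  assumes "M \<in> modL"
  shows "\<exists>(d :: 'l list set \<Rightarrow> nat) b. (\<forall>N. d N < b) \<and>
    (\<forall>N N'. submodule M N \<longrightarrow> submodule M N' \<longrightarrow> N \<subset> N' \<longrightarrow> d N < d N')"
proof -
  have M: "rmodule M" "fin_gen M" using assms unfolding modL_def by simp_all
  obtain s n where s: "\<forall>i. s i \<in> rm_carrier M"
    and gen: "rm_carrier M = {lincomb M s f n | f. f \<in> coeff_vecs n}"
    using fin_gen_ex_lincombs[OF M] by blast
  have "V.dim (coeffs_in M s n N) < Suc (card (coord_basis n))"
    "submodule M N \<Longrightarrow> submodule M N' \<Longrightarrow> N \<subset> N' \<Longrightarrow>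
      V.dim (coeffs_in M s n N) < V.dim (coeffs_in M s n N')" for N N'
    using dim_coeffs_in_le[OF M(1) s[rule_format] gen]
      dim_coeffs_in_strict_mono[OF M(1) s[rule_format] gen] by (simp_all add: le_imp_less_Suc)
  then show ?thesis
    by (intro exI[of _ "\<lambda>N. V.dim (coeffs_in M s n N)"] exI[of _ "Suc (card (coord_basis n))"])
      blast
qed

lemma modL_ex_maximal_submodule:
  fixes M :: "'l modl"
  assumes "M \<in> modL" "F \<noteq> {}" "\<And>N. N \<in> F \<Longrightarrow> submodule M N"
  shows "\<exists>N\<in>F. \<forall>N'\<in>F. N \<subseteq> N' \<longrightarrow> N' = N"
proof -
  obtain d :: "'l list set \<Rightarrow> nat" and b where bound: "\<forall>N. d N < b"
    and mono: "\<forall>N N'. submodule M N \<longrightarrow> submodule M N' \<longrightarrow> N \<subset> N' \<longrightarrow> d N < d N'"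
    using modL_submodule_measure[OF assms(1)] by blast
  show ?thesis
  proof (rule ex_maximal_by_nat_measure[OF assms(2)])
    show "d N < b" for N using bound by blast
    show "d N < d N'" if "N \<in> F" "N' \<in> F" "N \<subset> N'" for N N'
      using mono assms(3) that by blast
  qed
qed

lemma modL_ex_minimal_submodule:
  fixes M :: "'l modl"
  assumes "M \<in> modL" "F \<noteq> {}" "\<And>N. N \<in> F \<Longrightarrow> submodule M N"
  shows "\<exists>N\<in>F. \<forall>N'\<in>F. N' \<subseteq> N \<longrightarrow> N' = N"
proof -
  obtain d :: "'l list set \<Rightarrow> nat"
    where mono: "\<forall>N N'. submodule M N \<longrightarrow> submodule M N' \<longrightarrow> N \<subset> N' \<longrightarrow> d N < d N'"
    using modL_submodule_measure[OF assms(1)] by blast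
  show ?thesis
  proof (rule ex_minimal_by_nat_measure[OF assms(2)])
    show "d N < d N'" if "N \<in> F" "N' \<in> F" "N \<subset> N'" for N N'
      using mono assms(3) that by blast
  qed
qed

end

section \<open>The torsion class and its strict subobjects\<close>

locale fd_torsion_class = fin_dim_algebra sc for sc :: "'k::field \<Rightarrow> 'l::ring_1 \<Rightarrow> 'l" +
  fixes G :: "'l modl set"
  assumes torsion_class: "torsion_class G"
begin

lemma G_modL: "X \<in> G \<Longrightarrow> X \<in> modL"
  using torsion_class unfolding torsion_class_def by blast

lemma rmodule_G: "X \<in> G \<Longrightarrow> rmodule X"
  using G_modL rmodule_modL by blast

lemma G_surj_image:
  "B \<in> G \<Longrightarrow> C \<in> modL \<Longrightarrow> rhom B C g \<Longrightarrow> g ` rm_carrier B = rm_carrier C \<Longrightarrow> C \<in> G"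
  using torsion_class unfolding torsion_class_def by blast

lemma G_extension: "A \<in> G \<Longrightarrow> C \<in> G \<Longrightarrow> B \<in> modL \<Longrightarrow> short_exact A f B g C \<Longrightarrow> B \<in> G"
  using torsion_class unfolding torsion_class_def by blast

lemma quot_G: "Y \<in> G \<Longrightarrow> submodule Y N \<Longrightarrow> quot Y N \<in> G"
  using G_surj_image modL_surj_image G_modL rmodule_G rmodule_quot rhom_quot_map
  by (metis quot_simps(1))

lemma G_image:
  assumes "restr Y A \<in> G" "Y \<in> modL" "Z \<in> modL" "rhom Y Z h" "A \<subseteq> rm_carrier Y"
  shows "restr Z (h ` A) \<in> G"
proof -
  have "submodule Y A"
    using submodule_if_rmodule_restr rmodule_G[OF assms(1)] assms(5) by blast
  then have "restr Z (h ` A) \<in> modL"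
    using modL_restr submodule_image rmodule_modL assms(2-4) by blast
  moreover have "rhom (restr Y A) (restr Z (h ` A)) h"
    using rhom_restr_cod[OF rhom_restr_dom[OF assms(4,5)]] by simp
  ultimately show ?thesis using G_surj_image[OF assms(1)] by simp
qed

lemma G_restr_extension:
  assumes Y: "Y \<in> modL" and h: "rhom Y Z h" and D: "submodule Y D"
    and "restr Y {x \<in> D. h x = rm_zero Z} \<in> G" and "restr Z (h ` D) \<in> G"
  shows "restr Y D \<in> G"
  using G_extension[OF assms(4,5) modL_restr[OF Y D]]
    short_exact_kernel_image[OF h submodule_subset[OF D]] by blast

lemma G_zero:
  assumes "Y \<in> G"
  shows "restr Y {rm_zero Y} \<in> G"
proof -
  have Y: "rmodule Y" using rmodule_G[OF assms] .
  then have "(\<lambda>_. rm_zero Y) ` rm_carrier Y = {rm_zero Y}"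
    using rm_zero_closed[OF Y] by blast
  moreover have "rhom Y Y (\<lambda>_. rm_zero Y)" using Y by (simp add: rhom_def)
  ultimately show ?thesis using G_image[of Y "rm_carrier Y" Y "\<lambda>_. rm_zero Y"] assms G_modL by simp
qed

lemma subobj_restr_iff:
  "A \<subseteq> rm_carrier Y \<Longrightarrow> subobj G (restr Y A) B \<longleftrightarrow> subobj G Y B \<and> B \<subseteq> A"
  unfolding subobj_def using submodule_restr_iff[of A Y B] by auto

lemma subobj_submodule: "subobj G Y A \<Longrightarrow> submodule Y A"
  and subobj_G: "subobj G Y A \<Longrightarrow> restr Y A \<in> G"
  and subobj_subset: "subobj G Y A \<Longrightarrow> A \<subseteq> rm_carrier Y"
  unfolding subobj_def submodule_def by blast+

lemma strict_sub_subobj: "strict_sub G Y A \<Longrightarrow> subobj G Y A"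
  and strict_sub_Int_G: "strict_sub G Y A \<Longrightarrow> subobj G Y B \<Longrightarrow> restr Y (A \<inter> B) \<in> G"
  unfolding strict_sub_def by blast+

lemma strict_sub_submodule: "strict_sub G Y A \<Longrightarrow> submodule Y A"
  and strict_sub_G: "strict_sub G Y A \<Longrightarrow> restr Y A \<in> G"
  and strict_sub_subset: "strict_sub G Y A \<Longrightarrow> A \<subseteq> rm_carrier Y"
  using subobj_submodule subobj_G subobj_subset strict_sub_subobj by blast+

lemma subobj_image:
  assumes "Y \<in> G" "Z \<in> G" "rhom Y Z h" "subobj G Y B"
  shows "subobj G Z (h ` B)"
  using assms submodule_image[OF rmodule_G rmodule_G] G_image[OF subobj_G] G_modL subobj_submodule
    subobj_subset unfolding subobj_def by metis

lemma subobj_Int_strict: "strict_sub G Y A \<Longrightarrow> subobj G Y B \<Longrightarrow> subobj G Y (A \<inter> B)"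
  using strict_sub_Int_G submodule_Int[OF strict_sub_submodule subobj_submodule]
  unfolding subobj_def by blast

lemma strict_sub_carrier: "Y \<in> G \<Longrightarrow> strict_sub G Y (rm_carrier Y)"
  using submodule_carrier[OF rmodule_G] subobj_G subobj_subset
  unfolding strict_sub_def subobj_def by (simp add: Int_absorb1)

lemma strict_sub_zero:
  assumes "Y \<in> G"
  shows "strict_sub G Y {rm_zero Y}"
proof -
  have "{rm_zero Y} \<inter> B = {rm_zero Y}" if "submodule Y B" for B
    using submodule_zero_mem[OF that] by blast
  then show ?thesis
    using submodule_zero[OF rmodule_G[OF assms]] G_zero[OF assms]
    unfolding strict_sub_def subobj_def by simp
qed

lemma strict_sub_restr:
  assumes "strict_sub G Y A" "subobj G Y A'" "A \<subseteq> A'"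
  shows "strict_sub G (restr Y A') A"
  using assms strict_sub_subobj strict_sub_Int_G subobj_restr_iff[OF subobj_subset[OF assms(2)]]
  unfolding strict_sub_def by simp

lemma strict_sub_trans:
  assumes "strict_sub G (restr Y A') A" "strict_sub G Y A'"
  shows "strict_sub G Y A"
proof -
  have A'Y: "A' \<subseteq> rm_carrier Y" using strict_sub_subset[OF assms(2)] .
  have A: "subobj G Y A" "A \<subseteq> A'"
    using strict_sub_subobj[OF assms(1)] subobj_restr_iff[OF A'Y] by blast+
  have "restr Y (A \<inter> B) \<in> G" if "subobj G Y B" for B
  proof -
    have "subobj G (restr Y A') (A' \<inter> B)"
      using subobj_Int_strict[OF assms(2) that] subobj_restr_iff[OF A'Y] by blast
    then have "restr Y (A \<inter> (A' \<inter> B)) \<in> G" using strict_sub_Int_G[OF assms(1)] by simp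
    then show ?thesis using A(2) by (simp add: Int_absorb2 Int_assoc [symmetric])
  qed
  with A(1) show ?thesis unfolding strict_sub_def by blast
qed

lemma strict_sub_Int:
  assumes "strict_sub G Y A" "strict_sub G Y A'"
  shows "strict_sub G Y (A \<inter> A')"
  using subobj_Int_strict[OF assms(1) strict_sub_subobj[OF assms(2)]]
    strict_sub_Int_G[OF assms(1) subobj_Int_strict[OF assms(2)]]
  unfolding strict_sub_def by (simp add: Int_assoc)

lemma strict_sub_image:
  assumes Y: "Y \<in> G" and Z: "Z \<in> G" and h: "rhom Y Z h"
    and ker: "restr Y (kern Y Z h) \<in> G" and img: "strict_sub G Z (h ` rm_carrier Y)"
    and L: "strict_sub G Y L"
  shows "strict_sub G Z (h ` L)"
proof -
  have LY: "L \<subseteq> rm_carrier Y" using strict_sub_subset[OF L] .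
  have "restr Z (h ` L \<inter> C) \<in> G" if C: "subobj G Z C" for C
  proof -
    define D where "D = {y \<in> rm_carrier Y. h y \<in> C}"
    have D: "submodule Y D"
      unfolding D_def
      by (rule submodule_preimage[OF rmodule_G[OF Y] rmodule_G[OF Z] h subobj_submodule[OF C]])
    have "{x \<in> D. h x = rm_zero Z} = kern Y Z h"
      using submodule_zero_mem[OF subobj_submodule[OF C]] unfolding D_def kern_def by auto
    moreover have "h ` D = h ` rm_carrier Y \<inter> C" unfolding D_def by blast
    ultimately have "subobj G Y D"
      using G_restr_extension[OF G_modL[OF Y] h D] ker strict_sub_Int_G[OF img C] D
      unfolding subobj_def by simp
    then have "restr Z (h ` (L \<inter> D)) \<in> G"
      using G_image[OF strict_sub_Int_G[OF L] G_modL[OF Y] G_modL[OF Z] h] LY by blast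
    moreover have "h ` (L \<inter> D) = h ` L \<inter> C" unfolding D_def using LY by blast
    ultimately show ?thesis by simp
  qed
  then show ?thesis
    using subobj_image[OF Y Z h strict_sub_subobj[OF L]] unfolding strict_sub_def by blast
qed

lemma strict_sub_preimage:
  assumes X: "X \<in> G" and C: "C \<in> G" and g: "rhom X C g"
    and ker: "strict_sub G X (kern X C g)" and K: "strict_sub G C K"
  shows "strict_sub G X {x \<in> rm_carrier X. g x \<in> K}" (is "strict_sub G X ?M")
proof -
  have M: "submodule X ?M"
    by (rule submodule_preimage[OF rmodule_G[OF X] rmodule_G[OF C] g strict_sub_submodule[OF K]])
  have MB: "restr X (?M \<inter> B) \<in> G" if B: "subobj G X B" for B
  proof -
    have "{x \<in> ?M \<inter> B. g x = rm_zero C} = kern X C g \<inter> B"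
      using submodule_zero_mem[OF strict_sub_submodule[OF K]] unfolding kern_def by auto
    moreover have "g ` (?M \<inter> B) = K \<inter> g ` B" using subobj_subset[OF B] by blast
    moreover note strict_sub_Int_G[OF ker B] strict_sub_Int_G[OF K subobj_image[OF X C g B]]
    ultimately show ?thesis
      using G_restr_extension[OF G_modL[OF X] g
          submodule_Int[OF M subobj_submodule[OF B]]]
      by simp
  qed
  have "restr X ?M \<in> G"
    using MB[OF strict_sub_subobj[OF strict_sub_carrier[OF X]]] by (simp add: Int_absorb2)
  with M MB show ?thesis unfolding strict_sub_def subobj_def by blast
qed

section \<open>Strict morphisms\<close>

lemma strict_morD:
  assumes "strict_mor G X Y h"
  shows "X \<in> G" "Y \<in> G" "rhom X Y h" "strict_sub G X (kern X Y h)"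
    "strict_sub G Y (h ` rm_carrier X)"
  using assms unfolding strict_mor_def by blast+

lemma strict_sub_image_mor:
  "strict_mor G Y Z h \<Longrightarrow> strict_sub G Y L \<Longrightarrow> strict_sub G Z (h ` L)"
  using strict_sub_image strict_morD strict_sub_G by metis

lemma strict_mor_corestrict:
  assumes "strict_mor G X Y h" "strict_sub G Y A" "h ` rm_carrier X \<subseteq> A"
  shows "strict_mor G X (restr Y A) h"
proof -
  note h = strict_morD[OF assms(1)]
  have "rhom X (restr Y A) h" using rhom_restr_cod[OF h(3) assms(3)] .
  moreover have "strict_sub G (restr Y A) (h ` rm_carrier X)"
    using strict_sub_restr[OF h(5) strict_sub_subobj[OF assms(2)] assms(3)] .
  ultimately show ?thesis using h strict_sub_G[OF assms(2)] unfolding strict_mor_def by simp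
qed

lemma strict_mor_extend:
  assumes "strict_mor G X (restr Y A) h" "strict_sub G Y A" "Y \<in> G"
  shows "strict_mor G X Y h"
proof -
  note h = strict_morD[OF assms(1)]
  have "rhom X Y h"
    using h(3) rhom_restr_cod_iff[OF strict_sub_subset[OF assms(2)]] by blast
  moreover have "strict_sub G Y (h ` rm_carrier X)" using strict_sub_trans[OF h(5) assms(2)] .
  ultimately show ?thesis using h assms(3) unfolding strict_mor_def by simp
qed

lemma strict_quot_image:
  assumes "strict_mor G X Y h"
  shows "strict_quot G X (restr Y (h ` rm_carrier X))"
  using strict_morD[OF assms] strict_sub_G rhom_restr_cod[OF strict_morD(3)[OF assms] subset_refl]
  unfolding strict_quot_def by (intro conjI exI[of _ h]) auto

lemma strict_mor_restrict:
  assumes g: "strict_mor G B C g" and S: "strict_sub G B S"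
  shows "strict_mor G (restr B S) C g"
proof -
  have "kern (restr B S) C g = S \<inter> kern B C g"
    using kern_restr_dom[OF strict_sub_subset[OF S]] .
  moreover have "strict_sub G (restr B S) (S \<inter> kern B C g)"
    using strict_sub_restr[OF strict_sub_Int[OF S strict_morD(4)[OF g]] strict_sub_subobj[OF S]]
    by blast
  ultimately show ?thesis
    using strict_morD[OF g] strict_sub_G[OF S] rhom_restr_dom[OF _ strict_sub_subset[OF S]]
      strict_sub_image_mor[OF g S] unfolding strict_mor_def by simp
qed

lemma strict_mor_comp_bij:
  assumes h: "strict_mor G X W h" and A: "A \<in> G"
    and \<psi>: "rhom W A \<psi>" "bij_betw \<psi> (rm_carrier W) (rm_carrier A)"
  shows "strict_mor G X A (\<psi> \<circ> h)"
proof -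
  note h' = strict_morD[OF h]
  have W: "rmodule W" using rmodule_G[OF h'(2)] .
  have ker\<psi>: "kern W A \<psi> = {rm_zero W}"
    using inj_on_iff_kern[OF W rmodule_G[OF A] \<psi>(1)] \<psi>(2) unfolding bij_betw_def by blast
  then have "kern X A (\<psi> \<circ> h) = kern X W h"
    using rhom_closed[OF h'(3)] unfolding kern_def by (auto simp: set_eq_iff)
  moreover have "strict_sub G A (\<psi> ` h ` rm_carrier X)"
    using strict_sub_image[OF h'(2) A \<psi>(1)] ker\<psi> G_zero[OF h'(2)] strict_sub_carrier[OF A]
      \<psi>(2) h'(5) unfolding bij_betw_def by simp
  ultimately show ?thesis
    using h' A rhom_comp[OF h'(3) \<psi>(1)] unfolding strict_mor_def by (simp add: image_comp)
qed

lemma strict_mor_comp_embedding: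
  assumes A: "A \<in> G" and f: "rhom A B f" "inj_on f (rm_carrier A)"
    and fA: "strict_sub G B (f ` rm_carrier A)" and h: "strict_mor G B Z h"
  shows "strict_mor G A Z (h \<circ> f)"
proof -
  let ?A' = "f ` rm_carrier A"
  note h' = strict_morD[OF h]
  have f': "rhom A (restr B ?A') f" using rhom_restr_cod[OF f(1) subset_refl] .
  have "kern A (restr B ?A') f = {rm_zero A}"
    using inj_on_iff_kern[OF rmodule_G[OF A] rmodule_G[OF h'(1)] f(1)] f(2) by simp
  then have "strict_sub G A (kern A (restr B ?A') f)" using strict_sub_zero[OF A] by simp
  moreover have "strict_sub G (restr B ?A') (kern B Z h \<inter> ?A')"
    using strict_sub_restr[OF strict_sub_Int[OF h'(4) fA] strict_sub_subobj[OF fA]] by blast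
  ultimately have "strict_sub G A {a \<in> rm_carrier A. f a \<in> kern B Z h \<inter> ?A'}"
    by (rule strict_sub_preimage[OF A strict_sub_G[OF fA] f'])
  moreover have "kern A Z (h \<circ> f) = {a \<in> rm_carrier A. f a \<in> kern B Z h \<inter> ?A'}"
    using rhom_closed[OF f(1)] unfolding kern_def by auto
  moreover have "strict_sub G Z ((h \<circ> f) ` rm_carrier A)"
    using strict_sub_image_mor[OF h fA] by (simp add: image_comp)
  ultimately show ?thesis
    using A h' rhom_comp[OF f(1) h'(3)] unfolding strict_mor_def by simp
qed

lemma strict_mor_comp_surj:
  assumes X: "X \<in> G" and C: "C \<in> G" and g: "rhom X C g" "g ` rm_carrier X = rm_carrier C"
    and ker: "strict_sub G X (kern X C g)" and h: "strict_mor G C Z h"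
  shows "strict_mor G X Z (h \<circ> g)"
proof -
  note h' = strict_morD[OF h]
  have "kern X Z (h \<circ> g) = {x \<in> rm_carrier X. g x \<in> kern C Z h}"
    using rhom_closed[OF g(1)] unfolding kern_def by auto
  moreover have "(h \<circ> g) ` rm_carrier X = h ` rm_carrier C"
    using g(2) image_comp by metis
  ultimately show ?thesis
    using strict_sub_preimage[OF X C g(1) ker h'(4)] X h' rhom_comp[OF g(1) h'(3)]
    unfolding strict_mor_def by simp
qed

lemma strict_mor_factor_through:
  assumes B: "B \<in> G" and C: "C \<in> G" and g: "rhom B C g" "g ` rm_carrier B = rm_carrier C"
    and ker: "strict_sub G B (kern B C g)"
    and h: "strict_mor G B Z h" and kern_le: "kern B C g \<subseteq> kern B Z h"
  shows "strict_mor G C Z (factor_through B g h)"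
proof -
  note h' = strict_morD[OF h]
  note factor = rmodule_G[OF B] rmodule_G[OF C] rmodule_G[OF h'(2)] g h'(3) kern_le
  have "strict_sub G C (g ` kern B Z h)"
    using strict_sub_image[OF B C g(1) strict_sub_G[OF ker]] strict_sub_carrier[OF C] g(2) h'(4)
    by simp
  then show ?thesis
    using C h' rhom_factor_through[OF factor] kern_factor_through[OF factor]
      factor_through_image[OF factor] unfolding strict_mor_def by simp
qed

lemma strict_mor_quot_map:
  assumes Y: "Y \<in> G" and T: "strict_sub G Y T"
  shows "strict_mor G Y (quot Y T) (quot_map Y T)"
  using Y T quot_G[OF Y strict_sub_submodule[OF T]]
    strict_sub_carrier[OF quot_G[OF Y strict_sub_submodule[OF T]]]
    rhom_quot_map[OF rmodule_G[OF Y] strict_sub_submodule[OF T]]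
    kern_quot_map[OF rmodule_G[OF Y] strict_sub_submodule[OF T]]
  unfolding strict_mor_def by simp

lemma strict_mor_inclusion:
  assumes Y: "Y \<in> G" and K: "strict_sub G Y K"
  shows "strict_mor G (restr Y K) Y id"
proof -
  have "kern (restr Y K) Y id = {rm_zero (restr Y K)}"
    using submodule_zero_mem[OF strict_sub_submodule[OF K]] unfolding kern_def by auto
  then show ?thesis
    using Y K strict_sub_G[OF K] strict_sub_zero[OF strict_sub_G[OF K]]
      rhom_inclusion[OF strict_sub_submodule[OF K]]
    unfolding strict_mor_def by simp
qed

section \<open>The orthogonal classes\<close>

lemma rperp_subset_G: "rperp G P \<subseteq> G"
  and lperp_subset_G: "lperp G Q \<subseteq> G"
  unfolding rperp_def lperp_def by blast+

lemma rperpD: "Y \<in> rperp G P \<Longrightarrow> X \<in> P \<Longrightarrow> strict_mor G X Y f \<Longrightarrow> x \<in> rm_carrier X \<Longrightarrow> f x = rm_zero Y"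
  unfolding rperp_def by blast

lemma lperpD: "Y \<in> lperp G Q \<Longrightarrow> X \<in> Q \<Longrightarrow> strict_mor G Y X f \<Longrightarrow> y \<in> rm_carrier Y \<Longrightarrow> f y = rm_zero X"
  unfolding lperp_def by blast

lemma rperpI:
  "Y \<in> G \<Longrightarrow> (\<And>X f x. X \<in> P \<Longrightarrow> strict_mor G X Y f \<Longrightarrow> x \<in> rm_carrier X \<Longrightarrow> f x = rm_zero Y)
    \<Longrightarrow> Y \<in> rperp G P"
  unfolding rperp_def by blast

lemma lperpI:
  "Y \<in> G \<Longrightarrow> (\<And>X f y. X \<in> Q \<Longrightarrow> strict_mor G Y X f \<Longrightarrow> y \<in> rm_carrier Y \<Longrightarrow> f y = rm_zero X)
    \<Longrightarrow> Y \<in> lperp G Q"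
  unfolding lperp_def by blast

lemma strict_exactD:
  assumes "strict_exact G A f B g C"
  shows "A \<in> G" "B \<in> G" "C \<in> G" "rhom A B f" "rhom B C g" "inj_on f (rm_carrier A)"
    "g ` rm_carrier B = rm_carrier C" "f ` rm_carrier A = kern B C g"
    "strict_sub G B (f ` rm_carrier A)"
  using assms unfolding strict_exact_def short_exact_def by blast+

lemma strict_exact_strict_mor:
  "strict_exact G A f B g C \<Longrightarrow> strict_mor G B C g"
  using strict_exactD[of A f B g C] strict_sub_carrier unfolding strict_mor_def by metis

lemma pseudo_torsion_subset_G: "pseudo_torsion G P \<Longrightarrow> P \<subseteq> G"
  and pseudo_torsionfree_subset_G: "pseudo_torsionfree G Q \<Longrightarrow> Q \<subseteq> G"
  unfolding pseudo_torsion_def pseudo_torsionfree_def by blast+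

lemma pseudo_torsion_extension:
  "pseudo_torsion G P \<Longrightarrow> A \<in> P \<Longrightarrow> C \<in> P \<Longrightarrow> strict_exact G A f B g C \<Longrightarrow> B \<in> P"
  unfolding pseudo_torsion_def by blast

lemma pseudo_torsionfree_extension:
  "pseudo_torsionfree G Q \<Longrightarrow> A \<in> Q \<Longrightarrow> C \<in> Q \<Longrightarrow> strict_exact G A f B g C \<Longrightarrow> B \<in> Q"
  unfolding pseudo_torsionfree_def by blast

lemma pseudo_torsionfree_strict_sub:
  "pseudo_torsionfree G Q \<Longrightarrow> Y \<in> Q \<Longrightarrow> strict_sub G Y A \<Longrightarrow> restr Y A \<in> Q"
  unfolding pseudo_torsionfree_def by blast

lemma pseudo_torsion_image:
  "pseudo_torsion G P \<Longrightarrow> X \<in> P \<Longrightarrow> strict_mor G X Y h \<Longrightarrow> restr Y (h ` rm_carrier X) \<in> P"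
  using strict_quot_image unfolding pseudo_torsion_def by blast

lemma pseudo_torsion_zero:
  assumes P: "pseudo_torsion G P" and Y: "Y \<in> G"
  shows "restr Y {rm_zero Y} \<in> P"
proof -
  obtain X where X: "X \<in> P" using P unfolding pseudo_torsion_def by blast
  then have XG: "X \<in> G" using pseudo_torsion_subset_G[OF P] by blast
  have img: "(\<lambda>_. rm_zero Y) ` rm_carrier X = {rm_zero Y}"
    using rm_zero_closed[OF rmodule_G[OF XG]] by blast
  then have "strict_mor G X (restr Y {rm_zero Y}) (\<lambda>_. rm_zero Y)"
    using XG Y G_zero[OF Y] strict_sub_carrier[OF XG] strict_sub_carrier[OF G_zero[OF Y]]
      rmodule_G[OF Y] unfolding strict_mor_def kern_def by (simp add: rhom_def)
  then show ?thesis using pseudo_torsion_image[OF P X] img by fastforce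
qed

lemma pseudo_torsionfree_iso:
  assumes Q: "pseudo_torsionfree G Q" and C: "C \<in> Q" and B: "B \<in> G"
    and \<phi>: "rhom B C \<phi>" "bij_betw \<phi> (rm_carrier B) (rm_carrier C)"
  shows "B \<in> Q"
proof -
  have CG: "C \<in> G" using C pseudo_torsionfree_subset_G[OF Q] by blast
  have "kern B C \<phi> = {rm_zero B}"
    using inj_on_iff_kern[OF rmodule_G[OF B] rmodule_G[OF CG] \<phi>(1)] \<phi>(2)
    unfolding bij_betw_def by blast
  then have "strict_exact G (restr C {rm_zero C}) (\<lambda>_. rm_zero B) B \<phi> C"
    using B CG G_zero[OF CG] strict_sub_zero[OF B] \<phi> rmodule_G[OF B]
    unfolding strict_exact_def short_exact_def bij_betw_def by (simp add: rhom_def)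
  then show ?thesis
    using pseudo_torsionfree_extension[OF Q _ C]
      pseudo_torsionfree_strict_sub[OF Q C strict_sub_zero[OF CG]] by blast
qed

lemma pseudo_torsionfree_trivial:
  assumes Q: "pseudo_torsionfree G Q" and B: "B \<in> G" and B0: "rm_carrier B = {rm_zero B}"
  shows "B \<in> Q"
proof -
  obtain Z where Z: "Z \<in> Q" using Q unfolding pseudo_torsionfree_def by blast
  then have ZG: "Z \<in> G" using pseudo_torsionfree_subset_G[OF Q] by blast
  have "rhom B (restr Z {rm_zero Z}) (\<lambda>_. rm_zero Z)"
    using rmodule_G[OF ZG] by (simp add: rhom_def)
  moreover have "bij_betw (\<lambda>_. rm_zero Z) (rm_carrier B) (rm_carrier (restr Z {rm_zero Z}))"
    using B0 by (simp add: bij_betw_def)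
  ultimately show ?thesis
    using pseudo_torsionfree_iso[OF Q pseudo_torsionfree_strict_sub[OF Q Z strict_sub_zero[OF ZG]]]
      B by blast
qed

lemma zero_in_rperp:
  assumes "Y \<in> G"
  shows "restr Y {rm_zero Y} \<in> rperp G P"
proof (rule rperpI[OF G_zero[OF assms]])
  fix X f x assume "strict_mor G X (restr Y {rm_zero Y}) f" "x \<in> rm_carrier X"
  then have "f x \<in> {rm_zero Y}" using rhom_closed[OF strict_morD(3)] by fastforce
  then show "f x = rm_zero (restr Y {rm_zero Y})" by simp
qed

lemma zero_in_lperp:
  assumes "Y \<in> G"
  shows "restr Y {rm_zero Y} \<in> lperp G Q"
proof (rule lperpI[OF G_zero[OF assms]])
  fix X f y assume f: "strict_mor G (restr Y {rm_zero Y}) X f"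
    and "y \<in> rm_carrier (restr Y {rm_zero Y})"
  then have "y = rm_zero (restr Y {rm_zero Y})" by simp
  then show "f y = rm_zero X"
    using rhom_zero[OF rmodule_G[OF G_zero[OF assms]] rmodule_G[OF strict_morD(2)[OF f]]
        strict_morD(3)[OF f]] by simp
qed

lemma rperp_strict_sub:
  assumes Y: "Y \<in> rperp G P" and A: "strict_sub G Y A"
  shows "restr Y A \<in> rperp G P"
proof (rule rperpI[OF strict_sub_G[OF A]])
  fix X f x assume X: "X \<in> P" and f: "strict_mor G X (restr Y A) f" and x: "x \<in> rm_carrier X"
  have "Y \<in> G" using Y rperp_subset_G by blast
  then show "f x = rm_zero (restr Y A)"
    using rperpD[OF Y X strict_mor_extend[OF f A] x] by simp
qed

lemma rperp_iso:
  assumes A: "A \<in> rperp G P" and W: "W \<in> G"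
    and \<phi>: "rhom A W \<phi>" "bij_betw \<phi> (rm_carrier A) (rm_carrier W)"
  shows "W \<in> rperp G P"
proof (rule rperpI[OF W])
  fix X f x assume X: "X \<in> P" and f: "strict_mor G X W f" and x: "x \<in> rm_carrier X"
  have AG: "A \<in> G" using A rperp_subset_G by blast
  have A_mod: "rmodule A" and W_mod: "rmodule W" using AG W by (simp_all add: rmodule_G)
  let ?\<psi> = "inv_into (rm_carrier A) \<phi>"
  have "strict_mor G X A (?\<psi> \<circ> f)"
    using strict_mor_comp_bij[OF f AG rhom_inv_into[OF A_mod W_mod \<phi>] bij_betw_inv_into[OF \<phi>(2)]] .
  then have "?\<psi> (f x) = rm_zero A" using rperpD[OF A X _ x] by simp
  moreover have "f x = \<phi> (?\<psi> (f x))"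
    using rhom_closed[OF strict_morD(3)[OF f] x] bij_betw_imp_surj_on[OF \<phi>(2)]
    by (simp add: f_inv_into_f)
  ultimately show "f x = rm_zero W" using rhom_zero[OF A_mod W_mod \<phi>(1)] by simp
qed

lemma rperp_extension:
  assumes P: "pseudo_torsion G P" and E: "strict_exact G A f B g C"
    and A: "A \<in> rperp G P" and C: "C \<in> rperp G P"
  shows "B \<in> rperp G P"
proof (rule rperpI[OF strict_exactD(2)[OF E]])
  note E' = strict_exactD[OF E]
  let ?A' = "f ` rm_carrier A"
  have "restr B ?A' \<in> rperp G P"
  proof (rule rperp_iso[OF A strict_sub_G[OF E'(9)]])
    show "rhom A (restr B ?A') f" using rhom_restr_cod[OF E'(4) subset_refl] .
    show "bij_betw f (rm_carrier A) (rm_carrier (restr B ?A'))"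
      using E'(6) unfolding bij_betw_def by simp
  qed
  fix X h x assume X: "X \<in> P" and h: "strict_mor G X B h" and x: "x \<in> rm_carrier X"
  let ?I = "h ` rm_carrier X"
  have "strict_mor G (restr B ?I) C g"
    using strict_mor_restrict[OF strict_exact_strict_mor[OF E] strict_morD(5)[OF h]] .
  then have "?I \<subseteq> ?A'"
    using rperpD[OF C pseudo_torsion_image[OF P X h]] rhom_closed[OF strict_morD(3)[OF h]]
    unfolding E'(8) kern_def by auto
  then show "h x = rm_zero B"
    using rperpD[OF \<open>restr B ?A' \<in> rperp G P\<close> X strict_mor_corestrict[OF h E'(9)] x] by simp
qed

lemma pseudo_torsionfree_rperp:
  assumes P: "pseudo_torsion G P"
  shows "pseudo_torsionfree G (rperp G P)"
proof -
  obtain X where "X \<in> P" using P unfolding pseudo_torsion_def by blast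
  then have "restr X {rm_zero X} \<in> rperp G P"
    using zero_in_rperp pseudo_torsion_subset_G[OF P] by blast
  then show ?thesis
    unfolding pseudo_torsionfree_def
    using rperp_subset_G rperp_strict_sub rperp_extension[OF P] by blast
qed

lemma lperp_strict_quot:
  assumes X: "X \<in> lperp G Q" and q: "strict_quot G X C"
  shows "C \<in> lperp G Q"
proof -
  obtain g where g: "rhom X C g" "g ` rm_carrier X = rm_carrier C"
    and ker: "strict_sub G X (kern X C g)" and XG: "X \<in> G" and CG: "C \<in> G"
    using q unfolding strict_quot_def by blast
  show ?thesis
  proof (rule lperpI[OF CG])
    fix Z h c assume Z: "Z \<in> Q" and h: "strict_mor G C Z h" and c: "c \<in> rm_carrier C"
    then obtain x where "x \<in> rm_carrier X" "c = g x" using g(2) by blast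
    then show "h c = rm_zero Z"
      using lperpD[OF X Z strict_mor_comp_surj[OF XG CG g ker h]] by simp
  qed
qed

lemma lperp_extension:
  assumes E: "strict_exact G A f B g C"
    and A: "A \<in> lperp G Q" and C: "C \<in> lperp G Q"
  shows "B \<in> lperp G Q"
proof (rule lperpI[OF strict_exactD(2)[OF E]])
  note E' = strict_exactD[OF E]
  fix Z h b assume Z: "Z \<in> Q" and h: "strict_mor G B Z h" and b: "b \<in> rm_carrier B"
  have "f ` rm_carrier A \<subseteq> kern B Z h"
    using lperpD[OF A Z strict_mor_comp_embedding[OF E'(1,4,6,9) h]] rhom_closed[OF E'(4)]
    unfolding kern_def by auto
  then have kern_le: "kern B C g \<subseteq> kern B Z h" using E'(8) by simp
  have "factor_through B g h (g b) = rm_zero Z"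
    using lperpD[OF C Z strict_mor_factor_through[OF E'(2,3,5,7) E'(9)[unfolded E'(8)] h kern_le]
        rhom_closed[OF E'(5) b]] .
  then show "h b = rm_zero Z"
    using factor_through_apply[OF rmodule_G[OF E'(2)] rmodule_G[OF E'(3)]
        rmodule_G[OF strict_morD(2)[OF h]] E'(5,7) strict_morD(3)[OF h] kern_le b] by simp
qed

lemma pseudo_torsion_lperp:
  assumes Q: "pseudo_torsionfree G Q"
  shows "pseudo_torsion G (lperp G Q)"
proof -
  obtain Z where "Z \<in> Q" using Q unfolding pseudo_torsionfree_def by blast
  then have "restr Z {rm_zero Z} \<in> lperp G Q"
    using zero_in_lperp pseudo_torsionfree_subset_G[OF Q] by blast
  then show ?thesis
    unfolding pseudo_torsion_def
    using lperp_subset_G lperp_strict_quot lperp_extension by blast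
qed

lemma strict_exact_preimage:
  assumes Y: "Y \<in> G" and Z: "Z \<in> G" and p: "rhom Y Z p" "p ` rm_carrier Y = rm_carrier Z"
    and ker: "strict_sub G Y (kern Y Z p)" and I: "strict_sub G Z I"
  shows "strict_exact G (restr Y (kern Y Z p)) id (restr Y {y \<in> rm_carrier Y. p y \<in> I}) p
    (restr Z I)"
    (is "strict_exact G _ _ (restr Y ?I') _ _")
proof -
  have I': "strict_sub G Y ?I'" using strict_sub_preimage[OF Y Z p(1) ker I] .
  have kern_I': "{y \<in> ?I'. p y = rm_zero Z} = kern Y Z p"
    using submodule_zero_mem[OF strict_sub_submodule[OF I]] unfolding kern_def by auto
  have "p ` ?I' = I"
  proof
    show "I \<subseteq> p ` ?I'"
    proof
      fix z assume "z \<in> I"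
      moreover obtain y where "y \<in> rm_carrier Y" "z = p y"
        using \<open>z \<in> I\<close> strict_sub_subset[OF I] p(2) by blast
      ultimately show "z \<in> p ` ?I'" by blast
    qed
  qed blast
  then have "short_exact (restr Y (kern Y Z p)) id (restr Y ?I') p (restr Z I)"
    using short_exact_kernel_image[OF p(1), of ?I'] kern_I' by simp
  moreover have "strict_sub G (restr Y ?I') (kern Y Z p)"
    using strict_sub_restr[OF ker strict_sub_subobj[OF I']] kern_I' by blast
  ultimately show ?thesis
    using strict_sub_G[OF ker] strict_sub_G[OF I'] strict_sub_G[OF I]
    unfolding strict_exact_def by simp
qed

lemma quot_by_maximal_in_rperp:
  assumes P: "pseudo_torsion G P" and Y: "Y \<in> G"
    and T: "strict_sub G Y T" "restr Y T \<in> P"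
    and max: "\<And>T'. strict_sub G Y T' \<Longrightarrow> restr Y T' \<in> P \<Longrightarrow> T \<subseteq> T' \<Longrightarrow> T' = T"
  shows "quot Y T \<in> rperp G P"
proof (rule rperpI[OF quot_G[OF Y strict_sub_submodule[OF T(1)]]])
  let ?p = "quot_map Y T"
  note p = strict_morD[OF strict_mor_quot_map[OF Y T(1)]]
  have Y_mod: "rmodule Y" and T_sub: "submodule Y T"
    using rmodule_G[OF Y] strict_sub_submodule[OF T(1)] .
  have kern_p: "kern Y (quot Y T) ?p = T" using kern_quot_map[OF Y_mod T_sub] .
  fix X h x assume X: "X \<in> P" and h: "strict_mor G X (quot Y T) h" and x: "x \<in> rm_carrier X"
  let ?I = "h ` rm_carrier X"
  let ?I' = "{y \<in> rm_carrier Y. ?p y \<in> ?I}"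
  have "strict_exact G (restr Y T) id (restr Y ?I') ?p (restr (quot Y T) ?I)"
    using strict_exact_preimage[OF Y p(2,3) _ p(4) strict_morD(5)[OF h]] kern_p by simp
  then have I'_P: "restr Y ?I' \<in> P"
    by (rule pseudo_torsion_extension[OF P T(2) pseudo_torsion_image[OF P X h]])
  have I'_strict: "strict_sub G Y ?I'"
    using strict_sub_preimage[OF Y p(2,3) p(4) strict_morD(5)[OF h]] by simp
  have T_I': "T \<subseteq> ?I'"
  proof
    fix t assume t: "t \<in> T"
    then have "?p t = rm_zero (quot Y T)"
      using quot_map_zero_iff[OF Y_mod T_sub] strict_sub_subset[OF T(1)] by blast
    then show "t \<in> ?I'"
      using t strict_sub_subset[OF T(1)]
        submodule_zero_mem[OF strict_sub_submodule[OF strict_morD(5)[OF h]]] by auto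
  qed
  have I'_eq: "?I' = T" using max[OF I'_strict I'_P T_I'] .
  have "h x \<in> ?p ` rm_carrier Y" using rhom_closed[OF strict_morD(3)[OF h] x] by simp
  then obtain y where y: "y \<in> rm_carrier Y" "h x = ?p y" by blast
  then have "y \<in> ?I'" using x by (auto intro: image_eqI[OF _ x])
  then have "y \<in> T" using I'_eq by simp
  then show "h x = rm_zero (quot Y T)" using y quot_map_zero_iff[OF Y_mod T_sub] by simp
qed

lemma lperp_rperp_eq:
  assumes P: "pseudo_torsion G P"
  shows "lperp G (rperp G P) = P"
proof
  show "P \<subseteq> lperp G (rperp G P)"
  proof
    fix X assume "X \<in> P"
    then show "X \<in> lperp G (rperp G P)"
      using rperpD pseudo_torsion_subset_G[OF P] by (intro lperpI) blast+
  qed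
next
  show "lperp G (rperp G P) \<subseteq> P"
  proof
    fix Y assume Y: "Y \<in> lperp G (rperp G P)"
    then have YG: "Y \<in> G" using lperp_subset_G by blast
    define F where "F = {T. strict_sub G Y T \<and> restr Y T \<in> P}"
    have "{rm_zero Y} \<in> F"
      unfolding F_def using strict_sub_zero[OF YG] pseudo_torsion_zero[OF P YG] by blast
    then obtain T where T: "strict_sub G Y T" "restr Y T \<in> P"
      and max: "\<forall>T'\<in>F. T \<subseteq> T' \<longrightarrow> T' = T"
      using modL_ex_maximal_submodule[OF G_modL[OF YG], of F] strict_sub_submodule
      unfolding F_def by blast
    have "quot Y T \<in> rperp G P"
      using quot_by_maximal_in_rperp[OF P YG T] max unfolding F_def by blast
    then have "quot_map Y T y = rm_zero (quot Y T)" if "y \<in> rm_carrier Y" for y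
      using lperpD[OF Y _ strict_mor_quot_map[OF YG T(1)] that] by blast
    then have "rm_carrier Y \<subseteq> T"
      using quot_map_zero_iff[OF rmodule_G[OF YG] strict_sub_submodule[OF T(1)]] by blast
    then have "T = rm_carrier Y" using strict_sub_subset[OF T(1)] by blast
    then show "Y \<in> P" using T(2) by simp
  qed
qed

lemma strict_exact_quot_kern:
  assumes Y: "Y \<in> G" and K: "strict_sub G Y K" and h: "strict_mor G (restr Y K) W h"
  defines "L \<equiv> kern (restr Y K) W h"
  shows "strict_exact G (restr W (h ` K)) (factor_through (restr Y K) h (quot_map Y L))
    (quot Y L) (factor_through Y (quot_map Y L) (quot_map Y K)) (quot Y K)"
proof -
  note h' = strict_morD[OF h, simplified]
  have L: "strict_sub G Y L" unfolding L_def using strict_sub_trans[OF h'(4) K] .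
  have LK: "L \<subseteq> K" unfolding L_def kern_def by auto
  note Y_mod = rmodule_G[OF Y] and K_sub = strict_sub_submodule[OF K]
  note q = quot_projection[OF Y_mod strict_sub_submodule[OF L] K_sub LK]
  note i = image_embeds_into_quot[OF Y_mod K_sub rmodule_G[OF h'(2)] h'(3), folded L_def]
  have "short_exact (restr W (h ` K)) (factor_through (restr Y K) h (quot_map Y L))
    (quot Y L) (factor_through Y (quot_map Y L) (quot_map Y K)) (quot Y K)"
    using q i unfolding short_exact_def by simp
  moreover have "strict_sub G (quot Y L) (quot_map Y L ` K)"
    using strict_sub_image_mor[OF strict_mor_quot_map[OF Y L] K] .
  ultimately show ?thesis
    using strict_sub_G[OF h'(5)] quot_G[OF Y] strict_sub_submodule[OF L] K_sub i(3)
    unfolding strict_exact_def by simp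
qed

lemma restr_by_minimal_in_lperp:
  assumes Q: "pseudo_torsionfree G Q" and Y: "Y \<in> G"
    and K: "strict_sub G Y K" "quot Y K \<in> Q"
    and min: "\<And>K'. strict_sub G Y K' \<Longrightarrow> quot Y K' \<in> Q \<Longrightarrow> K' \<subseteq> K \<Longrightarrow> K' = K"
  shows "restr Y K \<in> lperp G Q"
proof (rule lperpI[OF strict_sub_G[OF K(1)]])
  fix W h k assume W: "W \<in> Q" and h: "strict_mor G (restr Y K) W h"
    and k: "k \<in> rm_carrier (restr Y K)"
  let ?L = "kern (restr Y K) W h"
  have "restr W (h ` K) \<in> Q"
    using pseudo_torsionfree_strict_sub[OF Q W strict_morD(5)[OF h]] by simp
  then have "quot Y ?L \<in> Q"
    by (rule pseudo_torsionfree_extension[OF Q _ K(2) strict_exact_quot_kern[OF Y K(1) h]])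
  moreover have "?L \<subseteq> K" unfolding kern_def by auto
  ultimately have "?L = K" using min strict_sub_trans[OF strict_morD(4)[OF h] K(1)] by blast
  then show "h k = rm_zero W" using k unfolding kern_def by auto
qed

lemma rperp_lperp_eq:
  assumes Q: "pseudo_torsionfree G Q"
  shows "rperp G (lperp G Q) = Q"
proof
  show "Q \<subseteq> rperp G (lperp G Q)"
  proof
    fix Y assume "Y \<in> Q"
    then show "Y \<in> rperp G (lperp G Q)"
      using lperpD pseudo_torsionfree_subset_G[OF Q] by (intro rperpI) blast+
  qed
next
  show "rperp G (lperp G Q) \<subseteq> Q"
  proof
    fix Y assume Y: "Y \<in> rperp G (lperp G Q)"
    then have YG: "Y \<in> G" using rperp_subset_G by blast
    have Y_mod: "rmodule Y" using rmodule_G[OF YG] .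
    define F where "F = {K. strict_sub G Y K \<and> quot Y K \<in> Q}"
    have "rm_carrier Y \<in> F"
      using strict_sub_carrier[OF YG] pseudo_torsionfree_trivial[OF Q quot_G[OF YG]]
        submodule_carrier[OF Y_mod] quot_carrier_trivial[OF Y_mod] unfolding F_def by blast
    then obtain K where K: "strict_sub G Y K" "quot Y K \<in> Q"
      and min: "\<forall>K'\<in>F. K' \<subseteq> K \<longrightarrow> K' = K"
      using modL_ex_minimal_submodule[OF G_modL[OF YG], of F] strict_sub_submodule
      unfolding F_def by blast
    have "restr Y K \<in> lperp G Q"
      using restr_by_minimal_in_lperp[OF Q YG K] min unfolding F_def by blast
    then have "K \<subseteq> {rm_zero Y}"
      using rperpD[OF Y _ strict_mor_inclusion[OF YG K(1)]] by fastforce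
    then have K0: "K = {rm_zero Y}"
      using submodule_zero_mem[OF strict_sub_submodule[OF K(1)]] by blast
    then have "inj_on (quot_map Y K) (rm_carrier Y)"
      using inj_on_iff_kern[OF Y_mod rmodule_quot rhom_quot_map] kern_quot_map
        strict_sub_submodule[OF K(1)] Y_mod by simp
    then show "Y \<in> Q"
      using pseudo_torsionfree_iso[OF Q K(2) YG]
        rhom_quot_map[OF Y_mod strict_sub_submodule[OF K(1)]]
      unfolding bij_betw_def by simp
  qed
qed

end

theorem mainTheorem8:
  fixes sc :: "'k::field \<Rightarrow> 'l::ring_1 \<Rightarrow> 'l"
    and G :: "'l modl set"
  assumes "fd_algebra sc"
    and "torsion_class G"
  shows "(\<forall>P. pseudo_torsion G P \<longrightarrow>
            pseudo_torsionfree G (rperp G P) \<and> lperp G (rperp G P) = P) \<and>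
         (\<forall>Q. pseudo_torsionfree G Q \<longrightarrow>
            pseudo_torsion G (lperp G Q) \<and> rperp G (lperp G Q) = Q) \<and>
         bij_betw (rperp G) {P. pseudo_torsion G P} {Q. pseudo_torsionfree G Q} \<and>
         (\<forall>Q. pseudo_torsionfree G Q \<longrightarrow> lperp G Q = inv_into {P. pseudo_torsion G P} (rperp G) Q)"
proof -
  interpret fd_torsion_class sc G
    using assms
    by (intro fd_torsion_class.intro fin_dim_algebra.intro fd_torsion_class_axioms.intro)
  have bij: "bij_betw (rperp G) {P. pseudo_torsion G P} {Q. pseudo_torsionfree G Q}"
    by (rule bij_betw_byWitness[where f' = "lperp G"])
      (auto simp: lperp_rperp_eq rperp_lperp_eq pseudo_torsionfree_rperp pseudo_torsion_lperp)
  have inv: "lperp G Q = inv_into {P. pseudo_torsion G P} (rperp G) Q"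
    if "pseudo_torsionfree G Q" for Q
    using inv_into_f_f[OF bij_betw_imp_inj_on[OF bij], of "lperp G Q"] that
    by (simp add: rperp_lperp_eq pseudo_torsion_lperp)
  show ?thesis
    using bij inv lperp_rperp_eq rperp_lperp_eq pseudo_torsionfree_rperp pseudo_torsion_lperp
    by blast
qed

end
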